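(* There exist universal constants $C_4>0$ and $c>0$ such that the following holds. Let $L\ge\mu>0$ with $\kappa=L/\mu>C_4$, let $0<\varepsilon<0.01$ and $D>0$. Then there exist positive integers $T$ and $t$ such that the function $\tilde g:\mathbb{R}^{Tt}\to\mathbb{R}$, $\tilde g(\mathbf{x})=\frac{LT^{-1}D^2}{37}\,g_{T,t}\big(\mathbf{y}-T^{1/2}D^{-1}\mathbf{x}\big)$, is $L$-smooth and satisfies the $\mu$-PL condition, and any first-order zero-respecting algorithm with $\mathbf{x}^{(0)}=\mathbf{0}$ needs at least $c\,\kappa\log\frac1\varepsilon$ gradient computations to find a point $\mathbf{x}$ satisfying $\tilde g(\mathbf{x})-\inf\tilde g\le\varepsilon\,(\tilde g(\mathbf{x}^{(0)})-\inf\tilde g)$ (i.e. the lower bound is $\Omega(\kappa\log\frac1\varepsilon)$).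
   Context: A differentiable $f:\mathbb{R}^d\to\mathbb{R}$ is $L$-smooth if $\|\nabla f(\mathbf{x})-\nabla f(\mathbf{z})\|\le L\|\mathbf{x}-\mathbf{z}\|$ for all $\mathbf{x},\mathbf{z}$; it satisfies the $\mu$-PL condition if $\|\nabla f(\mathbf{x})\|^2\ge2\mu(f(\mathbf{x})-\inf f)$ for all $\mathbf{x}$. For a constant $y>0$ define $v_y:\mathbb{R}\to\mathbb{R}$ by $v_y(x)=\frac12x^2$ if $x\le\frac{31}{32}y$; $v_y(x)=\frac12x^2-16(x-\frac{31}{32}y)^2$ if $\frac{31}{32}y<x\le y$; $v_y(x)=\frac12x^2-\frac{y^2}{32}+16(x-\frac{33}{32}y)^2$ if $y<x\le\frac{33}{32}y$; $v_y(x)=\frac12x^2-\frac{y^2}{32}$ if $x>\frac{33}{32}y$. For $\mathbf{x}\in\mathbb{R}^{Tt}$, with the convention $\mathbf{x}_0=0$, let $q_{T,t}(\mathbf{x})=\frac12\sum_{i=0}^{t-1}\big[(\frac78\mathbf{x}_{iT}-\mathbf{x}_{iT+1})^2+\sum_{j=1}^{T-1}(\mathbf{x}_{iT+j+1}-\mathbf{x}_{iT+j})^2\big]$. Let $\mathbf{y}\in\mathbb{R}^{Tt}$ be given by $\mathbf{y}_{qT+b}=(7/8)^q$ for $q\in\{0,\dots,t-1\}$, $b\in\{1,\dots,T\}$, and $g_{T,t}(\mathbf{x})=q_{T,t}(\mathbf{x})+\sum_{i=1}^{Tt}v_{\mathbf{y}_i}(\mathbf{x}_i)$. A first-order algorithm,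 applied to a differentiable $f:\mathbb{R}^d\to\mathbb{R}$, produces iterates $\mathbf{x}^{(0)},\mathbf{x}^{(1)},\dots$ where each $\mathbf{x}^{(i)}$ is a (deterministic) function of $\mathbf{x}^{(0)},\nabla f(\mathbf{x}^{(0)}),\dots,\mathbf{x}^{(i-1)},\nabla f(\mathbf{x}^{(i-1)})$; producing $\mathbf{x}^{(k)}$ counts as $k$ gradient computations. It is zero-respecting if for every $f$ and $n\ge1$, $\mathrm{supp}(\mathbf{x}^{(n)}-\mathbf{x}^{(0)})\subseteq\bigcup_{i=0}^{n-1}\mathrm{supp}(\nabla f(\mathbf{x}^{(i)}))$, where $\mathrm{supp}(\mathbf{v})=\{i:\mathbf{v}_i\ne0\}$. *)

theory Defs
  imports Complex_Main
begin

text \<open>Points of R^N are encoded as functions nat \<Rightarrow> real whose coordinates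
  are indexed by 1..N and vanish at index 0 and above N.\<close>

definition vecs :: "nat \<Rightarrow> (nat \<Rightarrow> real) set" where
  "vecs N = {x. \<forall>i. (i = 0 \<or> N < i) \<longrightarrow> x i = 0}"

definition vinner :: "nat \<Rightarrow> (nat \<Rightarrow> real) \<Rightarrow> (nat \<Rightarrow> real) \<Rightarrow> real" where
  "vinner N x z = (\<Sum>i=1..N. x i * z i)"

definition vnorm :: "nat \<Rightarrow> (nat \<Rightarrow> real) \<Rightarrow> real" where
  "vnorm N x = sqrt (\<Sum>i=1..N. (x i)^2)"

definition supp :: "(nat \<Rightarrow> real) \<Rightarrow> nat set" where
  "supp v = {i. v i \<noteq> 0}"

definition has_grad :: "nat \<Rightarrow> ((nat \<Rightarrow> real) \<Rightarrow> real) \<Rightarrow> (nat \<Rightarrow> real) \<Rightarrow> (nat \<Rightarrow> real) \<Rightarrow> bool" where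
  "has_grad N f x g \<longleftrightarrow> g \<in> vecs N \<and>
     (\<forall>e>0. \<exists>d>0. \<forall>h\<in>vecs N. vnorm N h < d \<longrightarrow>
        \<bar>f (\<lambda>i. x i + h i) - f x - vinner N g h\<bar> \<le> e * vnorm N h)"

definition grad :: "nat \<Rightarrow> ((nat \<Rightarrow> real) \<Rightarrow> real) \<Rightarrow> (nat \<Rightarrow> real) \<Rightarrow> (nat \<Rightarrow> real)" where
  "grad N f x = (THE g. has_grad N f x g)"

definition differentiable_Rn :: "nat \<Rightarrow> ((nat \<Rightarrow> real) \<Rightarrow> real) \<Rightarrow> bool" where
  "differentiable_Rn N f \<longleftrightarrow> (\<forall>x\<in>vecs N. \<exists>g. has_grad N f x g)"

definition L_smooth :: "nat \<Rightarrow> real \<Rightarrow> ((nat \<Rightarrow> real) \<Rightarrow> real) \<Rightarrow> bool" where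
  "L_smooth N L f \<longleftrightarrow> differentiable_Rn N f \<and>
     (\<forall>x\<in>vecs N. \<forall>z\<in>vecs N. vnorm N (\<lambda>i. grad N f x i - grad N f z i) \<le> L * vnorm N (\<lambda>i. x i - z i))"

definition PL_cond :: "nat \<Rightarrow> real \<Rightarrow> ((nat \<Rightarrow> real) \<Rightarrow> real) \<Rightarrow> bool" where
  "PL_cond N \<mu> f \<longleftrightarrow> differentiable_Rn N f \<and> bdd_below (f ` vecs N) \<and>
     (\<forall>x\<in>vecs N. (vnorm N (grad N f x))^2 \<ge> 2 * \<mu> * (f x - Inf (f ` vecs N)))"

text \<open>A deterministic first-order algorithm: maps the history
  [(x^(0), grad f x^(0)), ..., (x^(i-1), grad f x^(i-1))] (i \<ge> 1) to x^(i).\<close>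
type_synonym fo_alg = "((nat \<Rightarrow> real) \<times> (nat \<Rightarrow> real)) list \<Rightarrow> (nat \<Rightarrow> real)"

fun hist :: "nat \<Rightarrow> fo_alg \<Rightarrow> ((nat \<Rightarrow> real) \<Rightarrow> real) \<Rightarrow> (nat \<Rightarrow> real) \<Rightarrow> nat
             \<Rightarrow> ((nat \<Rightarrow> real) \<times> (nat \<Rightarrow> real)) list" where
  "hist N A f x0 0 = []"
| "hist N A f x0 (Suc k) =
     (let xk = (if k = 0 then x0 else A (hist N A f x0 k)) in hist N A f x0 k @ [(xk, grad N f xk)])"

definition iterate :: "nat \<Rightarrow> fo_alg \<Rightarrow> ((nat \<Rightarrow> real) \<Rightarrow> real) \<Rightarrow> (nat \<Rightarrow> real) \<Rightarrow> nat \<Rightarrow> (nat \<Rightarrow> real)" where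
  "iterate N A f x0 k = (if k = 0 then x0 else A (hist N A f x0 k))"

definition zero_respecting :: "nat \<Rightarrow> fo_alg \<Rightarrow> bool" where
  "zero_respecting N A \<longleftrightarrow> (\<forall>f x0 n. differentiable_Rn N f \<longrightarrow> x0 \<in> vecs N \<longrightarrow> 1 \<le> n \<longrightarrow>
      supp (\<lambda>i. iterate N A f x0 n i - x0 i) \<subseteq> (\<Union>i<n. supp (grad N f (iterate N A f x0 i))))"

definition v_fun :: "real \<Rightarrow> real \<Rightarrow> real" where
  "v_fun y x =
    (if x \<le> 31/32 * y then x^2/2
     else if x \<le> y then x^2/2 - 16 * (x - 31/32 * y)^2
     else if x \<le> 33/32 * y then x^2/2 - y^2/32 + 16 * (x - 33/32 * y)^2
     else x^2/2 - y^2/32)"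

text \<open>q_{T,t}, with the convention x_0 = 0 enforced explicitly.\<close>
definition q_fun :: "nat \<Rightarrow> nat \<Rightarrow> (nat \<Rightarrow> real) \<Rightarrow> real" where
  "q_fun T t x = 1/2 * (\<Sum>i<t.
      (7/8 * (if i*T = 0 then 0 else x (i*T)) - x (i*T+1))^2
      + (\<Sum>j=1..T-1. (x (i*T+j+1) - x (i*T+j))^2))"

definition y_vec :: "nat \<Rightarrow> nat \<Rightarrow> nat \<Rightarrow> real" where
  "y_vec T t i = (if 1 \<le> i \<and> i \<le> T*t then (7/8) ^ ((i - 1) div T) else 0)"

definition g_fun :: "nat \<Rightarrow> nat \<Rightarrow> (nat \<Rightarrow> real) \<Rightarrow> real" where
  "g_fun T t x = q_fun T t x + (\<Sum>i=1..T*t. v_fun (y_vec T t i) (x i))"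

definition g_tilde :: "real \<Rightarrow> real \<Rightarrow> nat \<Rightarrow> nat \<Rightarrow> (nat \<Rightarrow> real) \<Rightarrow> real" where
  "g_tilde L D T t x = L * D^2 / (37 * real T) *
     g_fun T t (\<lambda>i. y_vec T t i - sqrt (real T) / D * x i)"

end

theory Submission
  imports Defs "HOL-Analysis.L2_Norm"
begin

(* Under the change of variables u = y - sqrt T / D * x, g_tilde is a multiple of
   g_fun = q_fun + sum of v_fun, where q_fun is the quadratic form of a chain whose residuals
   u m - c m * u (m - 1) vanish at u = y from the second index on, and v_fun y lowers x^2/2 by y^2/32 across a short bump
   around y.  The gradient of g_fun is 37-Lipschitz, which gives L-smoothness after rescaling.
   For the PL inequality, g_fun is at most O(T) times its squared gradient: coordinates outside
   the bump are controlled by Cauchy-Schwarz applied to the inner product of the gradient with u,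
   and if some ratio u m / y m enters the bump, the chain recursion forces a gradient entry of
   size y s / 32 for the first such index s, which pays for all later coordinates because y
   decays geometrically from block to block.
   A zero-respecting method started at 0 has touched only the first k coordinates after k
   gradient evaluations, so block k div T + 1 still has u = y and contributes
   31/64 * T * (49/64)^(k div T + 1) to g_fun, whereas g_fun is at most 3 T at the start.
   Relative accuracy eps therefore costs T ln (1/eps) / 4 gradients, and T is of order kappa. *)

section \<open>Norms and gradients on coordinate vectors\<close>

lemma vnorm_eq_L2_set: "vnorm N x = L2_set x {1..N}"
  unfolding vnorm_def L2_set_def by simp

lemma vnorm_nonneg: "vnorm N x \<ge> 0"
  unfolding vnorm_def by (intro real_sqrt_ge_zero sum_nonneg) simp

lemma vnorm_power2: "(vnorm N x)^2 = (\<Sum>i=1..N. (x i)^2)"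
  unfolding vnorm_def by (simp add: sum_nonneg del: One_nat_def)

lemma vinner_abs_le: "\<bar>vinner N x z\<bar> \<le> vnorm N x * vnorm N z"
proof -
  have "\<bar>vinner N x z\<bar> \<le> (\<Sum>i=1..N. \<bar>x i\<bar> * \<bar>z i\<bar>)"
    unfolding vinner_def by (rule order_trans[OF sum_abs]) (simp add: abs_mult)
  also have "\<dots> \<le> L2_set x {1..N} * L2_set z {1..N}" by (rule L2_set_mult_ineq)
  finally show ?thesis by (simp add: vnorm_eq_L2_set)
qed

lemma vnorm_scale: "vnorm N (\<lambda>i. c * x i) = \<bar>c\<bar> * vnorm N x"
proof -
  have "(\<Sum>i=1..N. (c * x i)^2) = c^2 * (\<Sum>i=1..N. (x i)^2)"
    by (simp add: power_mult_distrib sum_distrib_left)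
  thus ?thesis unfolding vnorm_def by (simp add: real_sqrt_mult)
qed

lemma vnorm_minus: "vnorm N (\<lambda>i. - x i) = vnorm N x"
  unfolding vnorm_def by simp

lemma vnorm_add_le: "vnorm N (\<lambda>i. x i + z i) \<le> vnorm N x + vnorm N z"
  unfolding vnorm_eq_L2_set by (rule L2_set_triangle_ineq)

lemma vnorm_diff_le: "vnorm N (\<lambda>i. x i - z i) \<le> vnorm N x + vnorm N z"
  using vnorm_add_le[of N x "\<lambda>i. - z i"] vnorm_minus[of N z] by simp

lemma vnorm_cong: "(\<And>i. 1 \<le> i \<Longrightarrow> i \<le> N \<Longrightarrow> x i = z i) \<Longrightarrow> vnorm N x = vnorm N z"
  unfolding vnorm_def by (metis (no_types, lifting) atLeastAtMost_iff sum.cong)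

lemma vnorm_le_if_sum_power2_le:
  assumes "(\<Sum>i=1..N. (x i)^2) \<le> c^2 * (\<Sum>i=1..N. (z i)^2)" "c \<ge> 0"
  shows "vnorm N x \<le> c * vnorm N z"
proof -
  have "vnorm N x \<le> sqrt (c^2 * (\<Sum>i=1..N. (z i)^2))" unfolding vnorm_def using assms(1) by simp
  also have "\<dots> = c * vnorm N z" unfolding vnorm_def using assms(2) by (simp add: real_sqrt_mult)
  finally show ?thesis .
qed

lemma vnorm_le_pointwise:
  assumes "\<And>i. 1 \<le> i \<Longrightarrow> i \<le> N \<Longrightarrow> \<bar>x i\<bar> \<le> c * \<bar>z i\<bar>" "c \<ge> 0"
  shows "vnorm N x \<le> c * vnorm N z"
proof (rule vnorm_le_if_sum_power2_le[OF _ assms(2)])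
  have "(x i)^2 \<le> (c * z i)^2" if "i \<in> {1..N}" for i
    using assms(1)[of i] that assms(2) by (simp add: abs_le_square_iff[symmetric] abs_mult)
  hence "(\<Sum>i=1..N. (x i)^2) \<le> (\<Sum>i=1..N. (c * z i)^2)" by (intro sum_mono) auto
  thus "(\<Sum>i=1..N. (x i)^2) \<le> c^2 * (\<Sum>i=1..N. (z i)^2)"
    by (simp add: power_mult_distrib sum_distrib_left)
qed

lemma vnorm_eq_0_iff: assumes "x \<in> vecs N" shows "vnorm N x = 0 \<longleftrightarrow> x = (\<lambda>_. 0)"
proof
  assume "vnorm N x = 0"
  hence "(\<Sum>i=1..N. (x i)^2) = 0" unfolding vnorm_def by (simp add: sum_nonneg)
  hence "\<forall>i\<in>{1..N}. x i = 0" by (subst (asm) sum_nonneg_eq_0_iff) auto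
  moreover have "x i = 0" if "i \<notin> {1..N}" for i
    using assms that unfolding vecs_def by (cases "i = 0") auto
  ultimately show "x = (\<lambda>_. 0)" by blast
qed (simp add: vnorm_def)

lemma has_grad_unique:
  assumes g1: "has_grad N f x g1" and g2: "has_grad N f x g2"
  shows "g1 = g2"
proof (rule ccontr)
  assume "g1 \<noteq> g2"
  define d where "d = (\<lambda>i. g1 i - g2 i)"
  have d_vec: "d \<in> vecs N" using g1 g2 unfolding has_grad_def vecs_def d_def by auto
  have "d \<noteq> (\<lambda>_. 0)" using \<open>g1 \<noteq> g2\<close> unfolding d_def by (auto simp: fun_eq_iff)
  hence d_pos: "vnorm N d > 0" using vnorm_eq_0_iff[OF d_vec] vnorm_nonneg[of N d] by linarith
  define e where "e = vnorm N d / 4"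
  have "e > 0" using d_pos unfolding e_def by simp
  then obtain \<delta>1 where "\<delta>1 > 0"
    and approx1: "\<forall>h\<in>vecs N. vnorm N h < \<delta>1 \<longrightarrow> \<bar>f (\<lambda>i. x i + h i) - f x - vinner N g1 h\<bar> \<le> e * vnorm N h"
    using g1 unfolding has_grad_def by blast
  obtain \<delta>2 where "\<delta>2 > 0"
    and approx2: "\<forall>h\<in>vecs N. vnorm N h < \<delta>2 \<longrightarrow> \<bar>f (\<lambda>i. x i + h i) - f x - vinner N g2 h\<bar> \<le> e * vnorm N h"
    using g2 \<open>e > 0\<close> unfolding has_grad_def by blast
  define \<tau> where "\<tau> = min \<delta>1 \<delta>2 / (2 * vnorm N d)"
  have "\<tau> > 0" using \<open>\<delta>1 > 0\<close> \<open>\<delta>2 > 0\<close> d_pos unfolding \<tau>_def by simp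
  define h where "h = (\<lambda>i. \<tau> * d i)"
  have "h \<in> vecs N" using d_vec unfolding h_def vecs_def by auto
  have h_norm: "vnorm N h = \<tau> * vnorm N d" unfolding h_def vnorm_scale using \<open>\<tau> > 0\<close> by simp
  hence "vnorm N h < \<delta>1" "vnorm N h < \<delta>2"
    using \<open>\<delta>1 > 0\<close> \<open>\<delta>2 > 0\<close> d_pos unfolding \<tau>_def by simp_all
  hence "\<bar>f (\<lambda>i. x i + h i) - f x - vinner N g1 h\<bar> \<le> e * vnorm N h"
    "\<bar>f (\<lambda>i. x i + h i) - f x - vinner N g2 h\<bar> \<le> e * vnorm N h"
    using approx1 approx2 \<open>h \<in> vecs N\<close> by blast+
  hence "vinner N g1 h - vinner N g2 h \<le> 2 * e * vnorm N h" by linarith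
  moreover have "vinner N g1 h - vinner N g2 h = \<tau> * (vnorm N d)^2"
    unfolding vinner_def h_def vnorm_power2 d_def sum_distrib_left sum_subtractf[symmetric]
    by (rule sum.cong) (auto simp: power2_eq_square algebra_simps)
  moreover have "2 * e * vnorm N h = \<tau> * (vnorm N d)^2 / 2"
    unfolding h_norm e_def by (simp add: power2_eq_square)
  ultimately show False using \<open>\<tau> > 0\<close> d_pos by simp
qed

lemma grad_eqI: "has_grad N f x g \<Longrightarrow> grad N f x = g"
  unfolding grad_def using has_grad_unique by blast

section \<open>The one-dimensional building block\<close>

definition ramp_sq :: "real \<Rightarrow> real" where
  "ramp_sq z = (max z 0)^2"

definition v_deriv :: "real \<Rightarrow> real \<Rightarrow> real" where
  "v_deriv y x = (if x \<le> 31/32 * y then x else if x \<le> y then x - 32 * (x - 31/32 * y)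
     else if x \<le> 33/32 * y then x + 32 * (x - 33/32 * y) else x)"

text \<open>The bump of \<open>v_fun y\<close>, as a condition on the ratio \<open>x / y\<close>; outside it \<open>v_deriv y x = x\<close>.\<close>

definition in_bump :: "real \<Rightarrow> bool" where
  "in_bump r \<longleftrightarrow> 31/32 < r \<and> r \<le> 33/32"

lemma v_fun_eq_ramps:
  assumes "y > 0"
  shows "v_fun y x = x^2/2 - 16 * ramp_sq (x - 31/32*y) + 32 * ramp_sq (x - y) - 16 * ramp_sq (x - 33/32*y)"
  using assms unfolding v_fun_def ramp_sq_def by (auto simp: max_def power2_eq_square algebra_simps)

lemma v_deriv_eq_ramps:
  assumes "y > 0"
  shows "v_deriv y x = x - 32 * max (x - 31/32*y) 0 + 64 * max (x - y) 0 - 32 * max (x - 33/32*y) 0"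
  using assms unfolding v_deriv_def by (auto simp: max_def algebra_simps)

lemma ramp_sq_taylor:
  fixes a b :: real
  defines "r \<equiv> ramp_sq b - ramp_sq a - 2 * max a 0 * (b - a)"
  shows "0 \<le> r \<and> r \<le> (b - a)^2"
proof (cases "a \<ge> 0"; cases "b \<ge> 0")
  assume "a \<ge> 0" "b \<ge> 0"
  then have "r = (b - a)^2" unfolding r_def ramp_sq_def by (simp add: power2_eq_square algebra_simps)
  then show ?thesis by simp
next
  assume "a \<ge> 0" "\<not> b \<ge> 0"
  then have "r = a^2 - 2 * (a * b)" "(b - a)^2 = r + b^2" "a * b \<le> 0"
    unfolding r_def ramp_sq_def by (auto simp: power2_eq_square algebra_simps mult_nonneg_nonpos)
  then show ?thesis using zero_le_power2[of a] zero_le_power2[of b] by linarith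
next
  assume "\<not> a \<ge> 0" "b \<ge> 0"
  then have "b^2 \<le> (b - a)^2" by (intro power_mono) auto
  with \<open>\<not> a \<ge> 0\<close> \<open>b \<ge> 0\<close> show ?thesis unfolding r_def ramp_sq_def by simp
next
  assume "\<not> a \<ge> 0" "\<not> b \<ge> 0"
  then show ?thesis unfolding r_def ramp_sq_def by simp
qed

lemma v_fun_taylor:
  assumes "y > 0"
  shows "\<bar>v_fun y b - v_fun y a - v_deriv y a * (b - a)\<bar> \<le> 33 * (b - a)^2"
proof -
  define r where "r c = ramp_sq (b - c) - ramp_sq (a - c) - 2 * max (a - c) 0 * (b - a)" for c
  have r: "0 \<le> r c" "r c \<le> (b - a)^2" for c
    using ramp_sq_taylor[of "b - c" "a - c"] unfolding r_def by auto
  have "v_fun y b - v_fun y a - v_deriv y a * (b - a)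
      = (b - a)^2 / 2 - 16 * r (31/32*y) + 32 * r y - 16 * r (33/32*y)"
    unfolding v_fun_eq_ramps[OF assms] v_deriv_eq_ramps[OF assms] r_def
    by (simp add: power2_eq_square field_simps)
  with r[of "31/32*y"] r[of y] r[of "33/32*y"] show ?thesis by (simp add: abs_le_iff)
qed

lemma v_deriv_lipschitz: "y > 0 \<Longrightarrow> \<bar>v_deriv y a - v_deriv y b\<bar> \<le> 33 * \<bar>a - b\<bar>"
  unfolding v_deriv_def by (auto simp: abs_if split: if_splits)

lemma v_fun_nonneg:
  assumes "y > 0"
  shows "v_fun y x \<ge> 0"
proof -
  consider "x \<le> 31/32*y" | "31/32*y < x" "x \<le> y" | "y < x" by linarith
  then show ?thesis
  proof cases
    case 1
    then show ?thesis by (simp add: v_fun_def)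
  next
    case 2
    have "(x - 31/32*y)^2 \<le> (y/32)^2" "(31/32*y)^2 \<le> x^2"
      using 2 assms by (intro power_mono; simp)+
    moreover have "0 \<le> y^2" by simp
    ultimately show ?thesis using 2 unfolding v_fun_def by (simp add: power_mult_distrib power_divide; linarith)
  next
    case 3
    have "y^2 \<le> x^2" using 3 assms by (intro power_mono) auto
    moreover have "x^2/2 - y^2/32 \<le> v_fun y x" using 3 assms by (simp add: v_fun_def)
    ultimately show ?thesis using zero_le_power2[of x] by linarith
  qed
qed

lemma v_fun_le_half_sq:
  assumes "y > 0"
  shows "v_fun y x \<le> x^2/2"
proof (cases "y < x \<and> x \<le> 33/32*y")
  case True
  then have "v_fun y x = x^2/2 - y^2/32 + 16 * (x - 33/32*y)^2"
    using assms by (simp add: v_fun_def)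
  moreover have "(x - 33/32*y)^2 \<le> (y/32)^2"
    using True unfolding abs_le_square_iff[symmetric] by (auto simp: abs_if)
  moreover have "(y/32)^2 = y^2/1024" by (simp add: power_divide)
  ultimately show ?thesis using zero_le_power2[of y] by linarith
next
  case False
  with assms show ?thesis unfolding v_fun_def by auto
qed

lemma v_fun_at_y: "y > 0 \<Longrightarrow> v_fun y y = 31/64 * y^2"
  by (simp add: v_fun_def power2_eq_square algebra_simps)

lemma v_deriv_at_y: "y > 0 \<Longrightarrow> v_deriv y y = 0"
  by (simp add: v_deriv_def)

lemma v_deriv_nonneg: "x \<ge> 0 \<Longrightarrow> y > 0 \<Longrightarrow> v_deriv y x \<ge> 0"
  by (auto simp: v_deriv_def)

lemma v_deriv_off_bump: "y > 0 \<Longrightarrow> \<not> in_bump (x / y) \<Longrightarrow> v_deriv y x = x"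
  by (auto simp: v_deriv_def in_bump_def field_simps)

lemma v_deriv_mult_self_nonneg: "y > 0 \<Longrightarrow> v_deriv y x * x \<ge> 0"
  by (cases "x \<ge> 0") (auto simp: v_deriv_def intro: mult_nonneg_nonneg v_deriv_nonneg)

lemma in_bump_power2_le: "y > 0 \<Longrightarrow> in_bump (x / y) \<Longrightarrow> x^2 \<le> (33/32)^2 * y^2"
  unfolding in_bump_def power_mult_distrib[symmetric]
  by (intro power_mono) (auto simp: field_simps)

section \<open>The chain structure of \<open>q_fun\<close> and \<open>y_vec\<close>\<close>

text \<open>Writing \<open>q_fun T t u = 1/2 * (\<Sum>m. (u m - c m * u (m - 1))^2)\<close>, the coefficient \<open>c m\<close>
  is \<open>0\<close> for \<open>m = 1\<close>, \<open>7/8\<close> at the first index of each later block of length \<open>T\<close>, and \<open>1\<close>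
  otherwise; \<open>y_vec\<close> solves \<open>chain_res T y m = 0\<close> for \<open>m \<ge> 2\<close> with \<open>y 1 = 1\<close>.\<close>

definition chain_coeff :: "nat \<Rightarrow> nat \<Rightarrow> real" where
  "chain_coeff T m = (if m \<le> 1 then 0 else if (m - 1) mod T = 0 then 7/8 else 1)"

definition chain_res :: "nat \<Rightarrow> (nat \<Rightarrow> real) \<Rightarrow> nat \<Rightarrow> real" where
  "chain_res T u m = u m - chain_coeff T m * u (m - 1)"

lemma chain_coeff_Suc_0 [simp]: "chain_coeff T (Suc 0) = 0"
  unfolding chain_coeff_def by simp

lemma chain_coeff_nonneg: "chain_coeff T m \<ge> 0"
  unfolding chain_coeff_def by auto

lemma chain_coeff_le_1: "chain_coeff T m \<le> 1"
  unfolding chain_coeff_def by auto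

lemma chain_coeff_ge: "2 \<le> m \<Longrightarrow> chain_coeff T m \<ge> 7/8"
  unfolding chain_coeff_def by auto

lemma chain_coeff_power2_le_1: "(chain_coeff T m)^2 \<le> 1"
  using chain_coeff_nonneg chain_coeff_le_1 by (simp add: power_le_one)

lemma chain_res_add: "chain_res T (\<lambda>i. u i + k i) m = chain_res T u m + chain_res T k m"
  unfolding chain_res_def by (simp add: algebra_simps)

lemma q_fun_block:
  assumes "T > 0"
  shows "(\<Sum>m=T*i+1..T*i+T. (chain_res T x m)^2) =
    (7/8 * (if i*T = 0 then 0 else x (i*T)) - x (i*T+1))^2 + (\<Sum>j=1..T-1. (x (i*T+j+1) - x (i*T+j))^2)"
proof -
  have "(\<Sum>m=T*i+1..T*i+T. (chain_res T x m)^2) = (\<Sum>b=1..T. (chain_res T x (T*i+b))^2)"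
    by (rule sum.reindex_bij_witness[where j="\<lambda>m. m - T*i" and i="\<lambda>b. T*i+b"]) auto
  also have "\<dots> = (chain_res T x (T*i+1))^2 + (\<Sum>b=2..T. (chain_res T x (T*i+b))^2)"
    using assms by (subst sum.atLeast_Suc_atMost) (auto simp: numeral_2_eq_2)
  also have "(\<Sum>b=2..T. (chain_res T x (T*i+b))^2) = (\<Sum>j=1..T-1. (chain_res T x (T*i+j+1))^2)"
    by (rule sum.reindex_bij_witness[where j="\<lambda>b. b - 1" and i="\<lambda>j. j+1"]) auto
  also have "\<dots> = (\<Sum>j=1..T-1. (x (i*T+j+1) - x (i*T+j))^2)"
  proof (rule sum.cong)
    fix j assume "j \<in> {1..T-1}"
    then have "chain_coeff T (T*i+j+1) = 1" unfolding chain_coeff_def by auto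
    then show "(chain_res T x (T*i+j+1))^2 = (x (i*T+j+1) - x (i*T+j))^2"
      unfolding chain_res_def by (simp add: mult.commute)
  qed simp
  also have "chain_coeff T (T*i+1) = (if i*T = 0 then 0 else 7/8)"
    unfolding chain_coeff_def by auto
  then have "(chain_res T x (T*i+1))^2 = (7/8 * (if i*T = 0 then 0 else x (i*T)) - x (i*T+1))^2"
    unfolding chain_res_def by (auto simp: mult.commute power2_commute)
  finally show ?thesis .
qed

lemma q_fun_eq_chain_res:
  assumes "T > 0"
  shows "q_fun T t x = 1/2 * (\<Sum>m=1..T*t. (chain_res T x m)^2)"
proof -
  have "(\<Sum>i<t. (7/8 * (if i*T = 0 then 0 else x (i*T)) - x (i*T+1))^2
      + (\<Sum>j=1..T-1. (x (i*T+j+1) - x (i*T+j))^2)) = (\<Sum>m=1..T*t. (chain_res T x m)^2)"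
  proof (induction t)
    case (Suc t)
    have "{1..T*Suc t} = {1..T*t} \<union> {T*t+1..T*t+T}" by auto
    then have "(\<Sum>m=1..T*Suc t. (chain_res T x m)^2)
        = (\<Sum>m=1..T*t. (chain_res T x m)^2) + (\<Sum>m=T*t+1..T*t+T. (chain_res T x m)^2)"
      by (simp add: sum.union_disjoint ivl_disj_int)
    then show ?case using Suc q_fun_block[OF assms, where i=t and x=x] by simp
  qed simp
  then show ?thesis unfolding q_fun_def by simp
qed

lemma sum_by_parts_shift:
  fixes a k c :: "nat \<Rightarrow> real"
  assumes "c 1 = 0"
  shows "(\<Sum>m=1..N. a m * (k m - c m * k (m - 1)))
    = (\<Sum>m=1..N. (a m - (if m < N then c (m+1) * a (m+1) else 0)) * k m)"
proof -
  have "(\<Sum>m=1..N. a m * c m * k (m - 1)) = (\<Sum>m=2..N. a m * c m * k (m - 1))"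
    using assms by (intro sum.mono_neutral_right) (auto simp: numeral_2_eq_2 not_less_eq_eq le_Suc_eq)
  also have "\<dots> = (\<Sum>m=1..N-1. c (m+1) * a (m+1) * k m)"
    by (rule sum.reindex_bij_witness[where j="\<lambda>m. m - 1" and i="\<lambda>m. m + 1"]) auto
  also have "\<dots> = (\<Sum>m=1..N. (if m < N then c (m+1) * a (m+1) else 0) * k m)"
    by (intro sum.mono_neutral_cong_left) auto
  finally show ?thesis
    by (simp add: algebra_simps sum_subtractf)
qed

lemma sum_mult_chain_res:
  "(\<Sum>m=1..N. a m * chain_res T k m)
    = (\<Sum>m=1..N. (a m - (if m < N then chain_coeff T (m+1) * a (m+1) else 0)) * k m)"
  unfolding chain_res_def by (rule sum_by_parts_shift) simp

lemma sum_shift_power2_le: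
  fixes k :: "nat \<Rightarrow> real"
  shows "(\<Sum>m=1..N. (if m \<ge> 2 then (k (m - 1))^2 else 0)) \<le> (\<Sum>m=1..N. (k m)^2)"
proof -
  have "(\<Sum>m=1..N. (if m \<ge> 2 then (k (m - 1))^2 else 0)) = (\<Sum>m=2..N. (k (m - 1))^2)"
    by (rule sum.mono_neutral_cong_right) auto
  also have "\<dots> = (\<Sum>m=1..N-1. (k m)^2)"
    by (rule sum.reindex_bij_witness[where j="\<lambda>m. m - 1" and i="\<lambda>m. m + 1"]) auto
  also have "\<dots> \<le> (\<Sum>m=1..N. (k m)^2)" by (rule sum_mono2) auto
  finally show ?thesis .
qed

lemma sum_chain_res_power2_le: "(\<Sum>m=1..N. (chain_res T k m)^2) \<le> 4 * (\<Sum>m=1..N. (k m)^2)"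
proof -
  have "(chain_res T k m)^2 \<le> 2 * (k m)^2 + 2 * (if m \<ge> 2 then (k (m - 1))^2 else 0)" for m
  proof -
    have "(chain_coeff T m * k (m - 1))^2 \<le> (if m \<ge> 2 then (k (m - 1))^2 else 0)"
      using mult_right_mono[OF chain_coeff_power2_le_1[of T m] zero_le_power2[of "k (m - 1)"]]
      by (auto simp: power_mult_distrib chain_coeff_def)
    moreover have "(a - b)^2 \<le> 2 * a^2 + 2 * b^2" for a b :: real
      using zero_le_power2[of "a + b"] by (simp add: power2_eq_square algebra_simps)
    ultimately show ?thesis unfolding chain_res_def by (smt (verit))
  qed
  then have "(\<Sum>m=1..N. (chain_res T k m)^2)
      \<le> 2 * (\<Sum>m=1..N. (k m)^2) + 2 * (\<Sum>m=1..N. (if m \<ge> 2 then (k (m - 1))^2 else 0))"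
    by (simp add: sum_mono sum.distrib[symmetric] sum_distrib_left)
  with sum_shift_power2_le[of k N] show ?thesis by simp
qed

lemma y_vec_pos: "1 \<le> m \<Longrightarrow> m \<le> T*t \<Longrightarrow> y_vec T t m > 0"
  unfolding y_vec_def by simp

lemma y_vec_power2: "1 \<le> m \<Longrightarrow> m \<le> T*t \<Longrightarrow> (y_vec T t m)^2 = (49/64) ^ ((m - 1) div T)"
  unfolding y_vec_def by (simp add: power_mult_distrib[symmetric] power2_eq_square)

lemma y_vec_chain:
  assumes "2 \<le> m" "m \<le> T*t"
  shows "y_vec T t m = chain_coeff T m * y_vec T t (m - 1)"
proof -
  obtain n where n: "m = Suc (Suc n)" using assms(1) by (metis add_2_eq_Suc le_Suc_ex)
  have "Suc n div T = (if Suc n mod T = 0 then Suc (n div T) else n div T)" by (rule div_Suc)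
  with assms show ?thesis unfolding y_vec_def chain_coeff_def n by auto
qed

lemma chain_res_y_vec: "2 \<le> m \<Longrightarrow> m \<le> T*t \<Longrightarrow> chain_res T (y_vec T t) m = 0"
  unfolding chain_res_def using y_vec_chain by simp

lemma y_vec_antimono:
  assumes "1 \<le> m" "m \<le> n" "n \<le> T*t"
  shows "(y_vec T t n)^2 \<le> (y_vec T t m)^2"
proof -
  have "(m - 1) div T \<le> (n - 1) div T" using assms by (intro div_le_mono) simp
  then show ?thesis using assms by (simp add: y_vec_power2 power_decreasing)
qed

section \<open>The gradient of \<open>g_fun\<close>\<close>

definition q_grad :: "nat \<Rightarrow> nat \<Rightarrow> (nat \<Rightarrow> real) \<Rightarrow> nat \<Rightarrow> real" where
  "q_grad T N u m = chain_res T u m - (if m < N then chain_coeff T (m+1) * chain_res T u (m+1) else 0)"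

definition g_grad :: "nat \<Rightarrow> nat \<Rightarrow> (nat \<Rightarrow> real) \<Rightarrow> nat \<Rightarrow> real" where
  "g_grad T t u m = (if 1 \<le> m \<and> m \<le> T*t then q_grad T (T*t) u m + v_deriv (y_vec T t m) (u m) else 0)"

lemma g_grad_in_vecs: "g_grad T t u \<in> vecs (T*t)"
  unfolding vecs_def g_grad_def by auto

lemma g_fun_eq_chain_res:
  assumes "T > 0"
  shows "g_fun T t u = 1/2 * (\<Sum>m=1..T*t. (chain_res T u m)^2) + (\<Sum>m=1..T*t. v_fun (y_vec T t m) (u m))"
  unfolding g_fun_def q_fun_eq_chain_res[OF assms] ..

lemma sum_g_grad_mult:
  "(\<Sum>m=1..T*t. g_grad T t u m * k m)
    = (\<Sum>m=1..T*t. chain_res T u m * chain_res T k m) + (\<Sum>m=1..T*t. v_deriv (y_vec T t m) (u m) * k m)"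
proof -
  have "(\<Sum>m=1..T*t. g_grad T t u m * k m)
      = (\<Sum>m=1..T*t. q_grad T (T*t) u m * k m + v_deriv (y_vec T t m) (u m) * k m)"
    by (rule sum.cong) (auto simp: g_grad_def algebra_simps)
  also have "(\<Sum>m=1..T*t. q_grad T (T*t) u m * k m) = (\<Sum>m=1..T*t. chain_res T u m * chain_res T k m)"
    unfolding sum_mult_chain_res[of "chain_res T u"] q_grad_def ..
  ultimately show ?thesis by (simp add: sum.distrib)
qed

lemma g_fun_taylor:
  assumes "T > 0"
  shows "\<bar>g_fun T t (\<lambda>i. u i + k i) - g_fun T t u - (\<Sum>m=1..T*t. g_grad T t u m * k m)\<bar>
     \<le> 35 * (\<Sum>m=1..T*t. (k m)^2)"
proof -
  define N where "N = T*t"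
  define rem where "rem m = v_fun (y_vec T t m) (u m + k m) - v_fun (y_vec T t m) (u m)
    - v_deriv (y_vec T t m) (u m) * k m" for m
  have "g_fun T t (\<lambda>i. u i + k i) - g_fun T t u - (\<Sum>m=1..N. g_grad T t u m * k m)
      = 1/2 * (\<Sum>m=1..N. (chain_res T k m)^2) + (\<Sum>m=1..N. rem m)"
    unfolding g_fun_eq_chain_res[OF assms] sum_g_grad_mult chain_res_add rem_def N_def
    by (simp add: power2_eq_square algebra_simps sum.distrib sum_subtractf sum_distrib_left)
  moreover have "\<bar>\<Sum>m=1..N. rem m\<bar> \<le> 33 * (\<Sum>m=1..N. (k m)^2)"
  proof -
    have "\<bar>rem m\<bar> \<le> 33 * (k m)^2" if "m \<in> {1..N}" for m
      using v_fun_taylor[OF y_vec_pos, of m T t "u m + k m" "u m"] that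
      unfolding rem_def N_def by simp
    then have "(\<Sum>m=1..N. \<bar>rem m\<bar>) \<le> (\<Sum>m=1..N. 33 * (k m)^2)" by (rule sum_mono)
    then show ?thesis by (simp add: sum_distrib_left order_trans[OF sum_abs])
  qed
  moreover have "0 \<le> (\<Sum>m=1..N. (chain_res T k m)^2)" by (intro sum_nonneg) auto
  moreover note sum_chain_res_power2_le[of T k N]
  ultimately show ?thesis unfolding N_def[symmetric] by (simp only: abs_le_iff) linarith
qed

lemma q_grad_norm_le: "vnorm N (q_grad T N d) \<le> 4 * vnorm N d"
proof -
  define shifted where "shifted m = (if m < N then chain_coeff T (m+1) * chain_res T d (m+1) else 0)" for m
  have res: "vnorm N (chain_res T d) \<le> 2 * vnorm N d"
    by (rule vnorm_le_if_sum_power2_le) (use sum_chain_res_power2_le[of T d N] in auto)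
  have "vnorm N shifted \<le> 1 * vnorm N (chain_res T d)"
  proof (rule vnorm_le_if_sum_power2_le)
    have "(\<Sum>m=1..N. (shifted m)^2) \<le> (\<Sum>m=1..N. (if m < N then (chain_res T d (m+1))^2 else 0))"
      using mult_right_mono[OF chain_coeff_power2_le_1 zero_le_power2]
      by (intro sum_mono) (auto simp: shifted_def power_mult_distrib)
    also have "\<dots> = (\<Sum>m=1..N-1. (chain_res T d (m+1))^2)"
      by (rule sum.mono_neutral_cong_right) auto
    also have "\<dots> = (\<Sum>m=2..N. (chain_res T d m)^2)"
      by (rule sum.reindex_bij_witness[where j="\<lambda>m. m + 1" and i="\<lambda>m. m - 1"]) auto
    also have "\<dots> \<le> (\<Sum>m=1..N. (chain_res T d m)^2)" by (rule sum_mono2) auto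
    finally show "(\<Sum>m=1..N. (shifted m)^2) \<le> 1^2 * (\<Sum>m=1..N. (chain_res T d m)^2)" by simp
  qed simp
  moreover have "vnorm N (q_grad T N d) \<le> vnorm N (chain_res T d) + vnorm N shifted"
    unfolding q_grad_def shifted_def by (rule vnorm_diff_le)
  ultimately show ?thesis using res by simp
qed

lemma g_grad_lipschitz:
  assumes "T > 0"
  shows "vnorm (T*t) (\<lambda>i. g_grad T t u i - g_grad T t u' i) \<le> 37 * vnorm (T*t) (\<lambda>i. u i - u' i)"
proof -
  define N where "N = T*t"
  define d where "d i = u i - u' i" for i
  define vd where "vd i = v_deriv (y_vec T t i) (u i) - v_deriv (y_vec T t i) (u' i)" for i
  have "vnorm N (\<lambda>i. g_grad T t u i - g_grad T t u' i) = vnorm N (\<lambda>i. q_grad T N d i + vd i)"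
    by (rule vnorm_cong) (auto simp: g_grad_def N_def d_def vd_def q_grad_def chain_res_def algebra_simps)
  also have "\<dots> \<le> vnorm N (q_grad T N d) + vnorm N vd"
    by (rule vnorm_add_le)
  also have "vnorm N vd \<le> 33 * vnorm N d"
    by (rule vnorm_le_pointwise) (auto simp: d_def vd_def N_def intro!: v_deriv_lipschitz y_vec_pos)
  finally show ?thesis using q_grad_norm_le[of N T d] unfolding N_def d_def by simp
qed

lemma y_vec_power2_step:
  assumes "1 \<le> m" "m < T*t"
  shows "49/64 * (y_vec T t m)^2 \<le> (y_vec T t (m+1))^2"
proof -
  have "(7/8)^2 \<le> (chain_coeff T (m+1))^2" using chain_coeff_ge[of "m+1" T] assms by (intro power_mono) auto
  then have "(7/8)^2 * (y_vec T t m)^2 \<le> (chain_coeff T (m+1))^2 * (y_vec T t m)^2" by (rule mult_right_mono) simp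
  moreover have "y_vec T t (m+1) = chain_coeff T (m+1) * y_vec T t m" using y_vec_chain[of "m+1"] assms by simp
  ultimately show ?thesis by (simp add: power_mult_distrib power_divide)
qed

lemma chain_res_div_y_vec:
  assumes "1 \<le> m" "m \<le> T*t"
  shows "chain_res T u m / y_vec T t m = u m / y_vec T t m - (if m = 1 then 0 else u (m - 1) / y_vec T t (m - 1))"
proof (cases "m = 1")
  case False
  then have "y_vec T t (m - 1) > 0" "chain_coeff T m > 0"
    using y_vec_pos[of "m - 1" T t] chain_coeff_ge[of m T] assms by auto
  moreover have "y_vec T t m = chain_coeff T m * y_vec T t (m - 1)" using y_vec_chain[of m] assms False by simp
  ultimately show ?thesis unfolding chain_res_def using False by (simp add: field_simps)
qed (simp add: chain_res_def)

lemma g_grad_div_y_vec: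
  fixes u :: "nat \<Rightarrow> real"
  assumes "1 \<le> m" "m < T*t"
  defines "a k \<equiv> chain_res T u k / y_vec T t k"
  shows "(chain_coeff T (m+1))^2 * a (m+1)
    = a m + v_deriv (y_vec T t m) (u m) / y_vec T t m - g_grad T t u m / y_vec T t m"
proof -
  have "y_vec T t m > 0" "chain_coeff T (m+1) > 0" "y_vec T t (m+1) = chain_coeff T (m+1) * y_vec T t m"
    using y_vec_pos[of m T t] chain_coeff_ge[of "m+1" T] y_vec_chain[of "m+1" T t] assms by auto
  moreover have "g_grad T t u m = chain_res T u m - chain_coeff T (m+1) * chain_res T u (m+1)
      + v_deriv (y_vec T t m) (u m)"
    using assms unfolding g_grad_def q_grad_def by simp
  ultimately show ?thesis unfolding a_def
    by (simp add: field_simps power2_eq_square) (simp add: distrib_left[symmetric])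
qed

lemma g_grad_last:
  "1 \<le> T*t \<Longrightarrow> g_grad T t u (T*t) = chain_res T u (T*t) + v_deriv (y_vec T t (T*t)) (u (T*t))"
  unfolding g_grad_def q_grad_def by simp

section \<open>Smoothness of the rescaled function\<close>

definition g_tilde_scale :: "real \<Rightarrow> real \<Rightarrow> nat \<Rightarrow> real" where
  "g_tilde_scale L D T = L * D^2 / (37 * real T)"

definition g_tilde_dilation :: "real \<Rightarrow> nat \<Rightarrow> real" where
  "g_tilde_dilation D T = sqrt (real T) / D"

definition g_tilde_arg :: "real \<Rightarrow> nat \<Rightarrow> nat \<Rightarrow> (nat \<Rightarrow> real) \<Rightarrow> nat \<Rightarrow> real" where
  "g_tilde_arg D T t x i = y_vec T t i - g_tilde_dilation D T * x i"

definition g_tilde_grad :: "real \<Rightarrow> real \<Rightarrow> nat \<Rightarrow> nat \<Rightarrow> (nat \<Rightarrow> real) \<Rightarrow> nat \<Rightarrow> real" where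
  "g_tilde_grad L D T t x i = - (g_tilde_scale L D T * g_tilde_dilation D T) * g_grad T t (g_tilde_arg D T t x) i"

lemma g_tilde_eq: "g_tilde L D T t x = g_tilde_scale L D T * g_fun T t (g_tilde_arg D T t x)"
  unfolding g_tilde_def g_tilde_scale_def g_tilde_arg_def g_tilde_dilation_def ..

lemma g_tilde_scale_pos: "T > 0 \<Longrightarrow> L > 0 \<Longrightarrow> D > 0 \<Longrightarrow> g_tilde_scale L D T > 0"
  unfolding g_tilde_scale_def by simp

lemma g_tilde_dilation_pos: "T > 0 \<Longrightarrow> D > 0 \<Longrightarrow> g_tilde_dilation D T > 0"
  unfolding g_tilde_dilation_def by simp

lemma g_tilde_scale_dilation:
  "T > 0 \<Longrightarrow> D > 0 \<Longrightarrow> g_tilde_scale L D T * (g_tilde_dilation D T)^2 = L / 37"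
  unfolding g_tilde_scale_def g_tilde_dilation_def by (simp add: power_divide field_simps)

lemma has_grad_if_quadratic_remainder:
  assumes "g \<in> vecs N" "K \<ge> 0"
    and remainder: "\<And>h. h \<in> vecs N \<Longrightarrow> \<bar>f (\<lambda>i. x i + h i) - f x - vinner N g h\<bar> \<le> K * (vnorm N h)^2"
  shows "has_grad N f x g"
  unfolding has_grad_def
proof (intro conjI allI impI assms(1))
  fix e :: real assume "e > 0"
  show "\<exists>\<delta>>0. \<forall>h\<in>vecs N. vnorm N h < \<delta> \<longrightarrow> \<bar>f (\<lambda>i. x i + h i) - f x - vinner N g h\<bar> \<le> e * vnorm N h"
  proof (intro exI[of _ "e / (K + 1)"] conjI ballI impI)
    show "e / (K + 1) > 0" using \<open>e > 0\<close> assms(2) by simp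
    fix h assume "h \<in> vecs N" "vnorm N h < e / (K + 1)"
    have "K * vnorm N h \<le> K * (e / (K + 1))"
      using \<open>vnorm N h < e / (K + 1)\<close> assms(2) by (intro mult_left_mono) auto
    also have "\<dots> \<le> e" using assms(2) \<open>e > 0\<close> by (simp add: field_simps)
    finally have "K * vnorm N h * vnorm N h \<le> e * vnorm N h" using vnorm_nonneg by (intro mult_right_mono) auto
    with remainder[OF \<open>h \<in> vecs N\<close>] show "\<bar>f (\<lambda>i. x i + h i) - f x - vinner N g h\<bar> \<le> e * vnorm N h"
      by (simp add: power2_eq_square mult.assoc)
  qed
qed

lemma g_tilde_taylor:
  assumes "T > 0" "L > 0" "D > 0"
  shows "\<bar>g_tilde L D T t (\<lambda>i. x i + h i) - g_tilde L D T t x - vinner (T*t) (g_tilde_grad L D T t x) h\<bar>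
    \<le> 35/37 * L * (vnorm (T*t) h)^2"
proof -
  define \<alpha> where "\<alpha> = g_tilde_scale L D T"
  define \<beta> where "\<beta> = g_tilde_dilation D T"
  define u where "u = g_tilde_arg D T t x"
  define k where "k i = - \<beta> * h i" for i
  have "\<alpha> > 0" unfolding \<alpha>_def using g_tilde_scale_pos assms by simp
  have "g_tilde_arg D T t (\<lambda>i. x i + h i) = (\<lambda>i. u i + k i)"
    unfolding u_def k_def g_tilde_arg_def \<beta>_def by (auto simp: algebra_simps)
  moreover have "vinner (T*t) (g_tilde_grad L D T t x) h = \<alpha> * (\<Sum>m=1..T*t. g_grad T t u m * k m)"
    unfolding vinner_def g_tilde_grad_def k_def u_def \<alpha>_def \<beta>_def sum_distrib_left
    by (rule sum.cong) auto
  ultimately have "\<bar>g_tilde L D T t (\<lambda>i. x i + h i) - g_tilde L D T t x - vinner (T*t) (g_tilde_grad L D T t x) h\<bar>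
      = \<alpha> * \<bar>g_fun T t (\<lambda>i. u i + k i) - g_fun T t u - (\<Sum>m=1..T*t. g_grad T t u m * k m)\<bar>"
    unfolding g_tilde_eq u_def[symmetric] \<alpha>_def[symmetric] using \<open>\<alpha> > 0\<close>
    by (simp add: abs_mult right_diff_distrib[symmetric])
  also have "\<dots> \<le> \<alpha> * (35 * (\<Sum>m=1..T*t. (k m)^2))"
    using g_fun_taylor[OF assms(1), of t u k] \<open>\<alpha> > 0\<close> by simp
  also have "(\<Sum>m=1..T*t. (k m)^2) = \<beta>^2 * (vnorm (T*t) h)^2"
    unfolding k_def vnorm_power2 by (simp add: power_mult_distrib sum_distrib_left)
  also have "\<alpha> * (35 * (\<beta>^2 * (vnorm (T*t) h)^2)) = 35 * (\<alpha> * \<beta>^2) * (vnorm (T*t) h)^2"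
    by simp
  finally show ?thesis
    unfolding \<alpha>_def \<beta>_def g_tilde_scale_dilation[OF assms(1,3)] by simp
qed

lemma has_grad_g_tilde:
  assumes "T > 0" "L > 0" "D > 0"
  shows "has_grad (T*t) (g_tilde L D T t) x (g_tilde_grad L D T t x)"
proof (rule has_grad_if_quadratic_remainder[where K = "35/37 * L"])
  show "g_tilde_grad L D T t x \<in> vecs (T*t)"
    using g_grad_in_vecs unfolding vecs_def g_tilde_grad_def by auto
qed (use g_tilde_taylor[OF assms] assms(2) in auto)

lemma grad_g_tilde: "T > 0 \<Longrightarrow> L > 0 \<Longrightarrow> D > 0 \<Longrightarrow> grad (T*t) (g_tilde L D T t) x = g_tilde_grad L D T t x"
  by (rule grad_eqI[OF has_grad_g_tilde])

lemma differentiable_g_tilde: "T > 0 \<Longrightarrow> L > 0 \<Longrightarrow> D > 0 \<Longrightarrow> differentiable_Rn (T*t) (g_tilde L D T t)"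
  unfolding differentiable_Rn_def using has_grad_g_tilde by blast

lemma g_tilde_L_smooth:
  assumes "T > 0" "L > 0" "D > 0"
  shows "L_smooth (T*t) L (g_tilde L D T t)"
  unfolding L_smooth_def
proof (intro conjI ballI)
  show "differentiable_Rn (T*t) (g_tilde L D T t)" by (rule differentiable_g_tilde[OF assms])
  fix x z
  define \<alpha> where "\<alpha> = g_tilde_scale L D T"
  define \<beta> where "\<beta> = g_tilde_dilation D T"
  have "\<alpha> > 0" "\<beta> > 0" unfolding \<alpha>_def \<beta>_def using assms g_tilde_scale_pos g_tilde_dilation_pos by auto
  have arg: "vnorm (T*t) (\<lambda>i. g_tilde_arg D T t x i - g_tilde_arg D T t z i) = \<beta> * vnorm (T*t) (\<lambda>i. x i - z i)"
    using vnorm_scale[of "T*t" "- \<beta>" "\<lambda>i. x i - z i"] \<open>\<beta> > 0\<close>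
    unfolding g_tilde_arg_def \<beta>_def by (simp add: algebra_simps)
  have grad_diff: "(\<lambda>i. grad (T*t) (g_tilde L D T t) x i - grad (T*t) (g_tilde L D T t) z i)
      = (\<lambda>i. - (\<alpha> * \<beta>) * (g_grad T t (g_tilde_arg D T t x) i - g_grad T t (g_tilde_arg D T t z) i))"
    unfolding grad_g_tilde[OF assms] g_tilde_grad_def \<alpha>_def \<beta>_def by (simp add: algebra_simps)
  have "vnorm (T*t) (\<lambda>i. grad (T*t) (g_tilde L D T t) x i - grad (T*t) (g_tilde L D T t) z i)
      = \<alpha> * \<beta> * vnorm (T*t) (\<lambda>i. g_grad T t (g_tilde_arg D T t x) i - g_grad T t (g_tilde_arg D T t z) i)"
    unfolding grad_diff vnorm_scale using \<open>\<alpha> > 0\<close> \<open>\<beta> > 0\<close> by simp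
  also have "\<dots> \<le> \<alpha> * \<beta> * (37 * (\<beta> * vnorm (T*t) (\<lambda>i. x i - z i)))"
    using g_grad_lipschitz[OF assms(1)] \<open>\<alpha> > 0\<close> \<open>\<beta> > 0\<close> unfolding arg[symmetric] by simp
  also have "\<dots> = 37 * (\<alpha> * \<beta>^2) * vnorm (T*t) (\<lambda>i. x i - z i)"
    by (simp add: power2_eq_square)
  also have "\<dots> = L * vnorm (T*t) (\<lambda>i. x i - z i)"
    unfolding \<alpha>_def \<beta>_def g_tilde_scale_dilation[OF assms(1,3)] by simp
  finally show "vnorm (T*t) (\<lambda>i. grad (T*t) (g_tilde L D T t) x i - grad (T*t) (g_tilde L D T t) z i)
      \<le> L * vnorm (T*t) (\<lambda>i. x i - z i)" .
qed

section \<open>The Polyak-Lojasiewicz inequality\<close>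

text \<open>The recursion satisfied along the chain by \<open>\<rho> m = u m / y m\<close>, its increments
  \<open>a m = chain_res T u m / y m\<close>, \<open>\<psi> m = v_deriv (y m) (u m) / y m\<close> and the normalised gradient
  \<open>e m = g_grad T t u m / y m\<close>, with weights \<open>W m = (y m)^2\<close> and \<open>c m = (chain_coeff T m)^2\<close>.
  If some ratio \<open>\<rho> s\<close> lies in the bump, the gradient cannot be small everywhere.\<close>

locale bump_chain =
  fixes a \<rho> \<psi> e W c :: "nat \<Rightarrow> real" and N s :: nat
  assumes rho_0: "\<rho> 0 = 0"
    and rho_step: "\<And>m. 1 \<le> m \<Longrightarrow> m \<le> N \<Longrightarrow> \<rho> m = \<rho> (m - 1) + a m"
    and a_step: "\<And>m. 1 \<le> m \<Longrightarrow> m < N \<Longrightarrow> c (m+1) * a (m+1) = a m + \<psi> m - e m"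
    and a_last: "a N + \<psi> N - e N = 0"
    and c_bounds: "\<And>m. 2 \<le> m \<Longrightarrow> m \<le> N \<Longrightarrow> 0 < c m \<and> c m \<le> 1"
    and W_pos: "\<And>m. 1 \<le> m \<Longrightarrow> m \<le> N \<Longrightarrow> W m > 0"
    and W_step: "\<And>m. 1 \<le> m \<Longrightarrow> m < N \<Longrightarrow> W (m+1) \<ge> 49/64 * W m"
    and W_antimono: "\<And>m n. 1 \<le> m \<Longrightarrow> m \<le> n \<Longrightarrow> n \<le> N \<Longrightarrow> W n \<le> W m"
    and psi_off_bump: "\<And>m. 1 \<le> m \<Longrightarrow> m \<le> N \<Longrightarrow> \<not> in_bump (\<rho> m) \<Longrightarrow> \<psi> m = \<rho> m"
    and psi_nonneg: "\<And>m. 1 \<le> m \<Longrightarrow> m \<le> N \<Longrightarrow> \<rho> m \<ge> 0 \<Longrightarrow> \<psi> m \<ge> 0"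
    and s_bump: "1 \<le> s" "s \<le> N" "in_bump (\<rho> s)"
    and s_first: "\<And>j. 1 \<le> j \<Longrightarrow> j < s \<Longrightarrow> \<not> in_bump (\<rho> j)"
begin

lemma a_step_lower:
  assumes "1 \<le> m" "m < N" "0 \<le> x" "x < a m + \<psi> m - e m"
  shows "x < a (m+1)"
proof -
  have c: "0 < c (m+1)" "c (m+1) \<le> 1" using c_bounds[of "m+1"] assms by auto
  have "x < c (m+1) * a (m+1)" using a_step[of m] assms by simp
  moreover have "0 < c (m+1) * a (m+1)" using calculation assms(3) by linarith
  then have "a (m+1) > 0" using c(1) by (simp add: zero_less_mult_iff)
  then have "c (m+1) * a (m+1) \<le> a (m+1)" using c by (simp add: mult_left_le_one_le)
  ultimately show ?thesis by linarith
qed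

context
  assumes small: "\<And>m. 1 \<le> m \<Longrightarrow> m \<le> N \<Longrightarrow> W m * (e m)^2 < W s / 1024"
begin

lemma e_small_up_to_bump:
  assumes "1 \<le> m" "m \<le> s"
  shows "e m < 1/32"
proof -
  have "W s * (e m)^2 \<le> W m * (e m)^2" using W_antimono[of m s] assms s_bump by (intro mult_right_mono) auto
  then have "W s * (e m)^2 < W s * (1/32)^2" using small[of m] assms s_bump by (simp add: power_divide)
  then have "(e m)^2 < (1/32)^2" using W_pos[of s] s_bump by simp
  then show ?thesis by (rule power2_less_imp_less) simp
qed

lemma small_step_into_bump_impossible:
  assumes "a s \<le> 1/4"
  shows False
proof -
  \<comment> \<open>Walking back from \<open>s\<close>, the ratios stay above \<open>23/32\<close> and the increments turn negative.\<close>
  have "\<rho> (s - n - 1) \<ge> 23/32 \<and> (2 \<le> s - n \<longrightarrow> c (s - n) * a (s - n) \<le> 1/4)" if "n < s" for n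
    using that
  proof (induction n)
    case 0
    have "\<rho> (s - 1) \<ge> 23/32"
      using rho_step[of s] s_bump assms unfolding in_bump_def by linarith
    moreover have "c s * a s \<le> 1/4" if "2 \<le> s"
    proof (cases "a s \<ge> 0")
      case True
      then show ?thesis using c_bounds[of s] that s_bump assms mult_left_le_one_le[of "a s" "c s"] by linarith
    next
      case False
      then show ?thesis using c_bounds[of s] that s_bump mult_pos_neg[of "c s" "a s"] by linarith
    qed
    ultimately show ?case by simp
  next
    case (Suc n)
    define j where "j = s - Suc n"
    have j: "1 \<le> j" "j < s" "s - n = j + 1" "s - Suc n - 1 = j - 1" using Suc.prems unfolding j_def by auto
    have IH: "\<rho> j \<ge> 23/32" "c (j+1) * a (j+1) \<le> 1/4"
      using Suc.IH Suc.prems j(3,4) unfolding j_def by auto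
    have "\<psi> j = \<rho> j" using psi_off_bump[of j] s_first[of j] j s_bump by linarith
    moreover have "e j < 1/32" using e_small_up_to_bump[of j] j by linarith
    moreover have "c (j+1) * a (j+1) = a j + \<psi> j - e j" using a_step[of j] j s_bump by linarith
    ultimately have "a j < 0" using IH by linarith
    moreover have "c j * a j \<le> 0" if "2 \<le> j"
      using c_bounds[of j] that j s_bump \<open>a j < 0\<close> mult_pos_neg[of "c j" "a j"] by linarith
    moreover have "\<rho> j = \<rho> (j - 1) + a j" using rho_step[of j] j s_bump by linarith
    ultimately show ?case using IH j unfolding j_def[symmetric] by auto
  qed
  from this[of "s - 1"] show False using rho_0 s_bump by simp
qed

lemma e_lt_half_ratio:
  assumes "1 \<le> m" "m \<le> N" "\<rho> m > 0" "W m * (\<rho> m)^2 \<ge> 49/64 * W s"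
  shows "e m < \<rho> m / 2"
proof -
  have "W s > 0" using W_pos s_bump by simp
  have "W m * (\<rho> m / 2)^2 = W m * (\<rho> m)^2 / 4" by (simp add: power_divide)
  then have "W m * (e m)^2 < W m * (\<rho> m / 2)^2"
    using small[OF assms(1,2)] assms(4) \<open>W s > 0\<close> by linarith
  then have "(e m)^2 < (\<rho> m / 2)^2" using W_pos[OF assms(1,2)] mult_less_cancel_left_pos by blast
  then show ?thesis using assms(3) power2_less_imp_less[of "e m" "\<rho> m / 2"] by linarith
qed

text \<open>Past the bump the ratios grow by a factor \<open>3/2\<close> per step, faster than the weights decay.\<close>

lemma ratios_escape_after_bump:
  assumes "a s > 1/4" "s + 1 + n \<le> N"
  shows "\<rho> (s+1+n) > 33/32 \<and> a (s+1+n) > 0 \<and> W (s+1+n) * (\<rho> (s+1+n))^2 \<ge> 49/64 * W s"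
  using assms(2)
proof (induction n)
  case 0
  have "\<psi> s \<ge> 0" using psi_nonneg[of s] s_bump unfolding in_bump_def by simp
  moreover have "e s < 1/32" using e_small_up_to_bump[of s] s_bump by simp
  ultimately have "7/32 < a (s+1)" using a_step_lower[of s "7/32"] 0 s_bump assms(1) by simp
  moreover have "\<rho> (s+1) = \<rho> s + a (s+1)" using rho_step[of "s+1"] 0 by simp
  ultimately have "\<rho> (s+1) > 33/32" using s_bump unfolding in_bump_def by linarith
  then have "W (s+1) * 1 \<le> W (s+1) * (\<rho> (s+1))^2"
    using W_pos[of "s+1"] 0 by (intro mult_left_mono) (auto simp: one_le_power)
  moreover have "49/64 * W s \<le> W (s+1)" using W_step[of s] 0 s_bump by simp
  ultimately show ?case using \<open>\<rho> (s+1) > 33/32\<close> \<open>7/32 < a (s+1)\<close> by simp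
next
  case (Suc n)
  define m where "m = s+1+n"
  have m: "1 \<le> m" "m < N" "s+1+Suc n = m+1" using Suc.prems s_bump unfolding m_def by auto
  have IH: "\<rho> m > 33/32" "a m > 0" "W m * (\<rho> m)^2 \<ge> 49/64 * W s"
    using Suc.IH Suc.prems unfolding m_def by auto
  have "\<psi> m = \<rho> m" using psi_off_bump[of m] m IH(1) unfolding in_bump_def by simp
  moreover have "e m < \<rho> m / 2" using e_lt_half_ratio[of m] m IH by simp
  ultimately have "\<rho> m / 2 < a (m+1)" using a_step_lower[of m "\<rho> m / 2"] m IH by simp
  moreover have "\<rho> (m+1) = \<rho> m + a (m+1)" using rho_step[of "m+1"] m by simp
  ultimately have \<rho>: "3/2 * \<rho> m < \<rho> (m+1)" by linarith
  then have "(3/2 * \<rho> m)^2 \<le> (\<rho> (m+1))^2" using IH by (intro power_mono) auto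
  moreover have "(3/2 * \<rho> m)^2 = 9/4 * (\<rho> m)^2" by (simp add: power2_eq_square)
  ultimately have "W m * (9/4 * (\<rho> m)^2) \<le> W m * (\<rho> (m+1))^2"
    using W_pos[of m] m by (intro mult_left_mono) auto
  moreover have "0 \<le> W m * (\<rho> m)^2" using W_pos[of m] m by simp
  ultimately have "W m * (\<rho> m)^2 \<le> 49/64 * (W m * (\<rho> (m+1))^2)" by linarith
  also have "\<dots> = 49/64 * W m * (\<rho> (m+1))^2" by simp
  also have "\<dots> \<le> W (m+1) * (\<rho> (m+1))^2"
    using W_step[of m] m by (intro mult_right_mono) auto
  finally show ?case using IH \<rho> \<open>\<rho> m / 2 < a (m+1)\<close> m(3) by simp
qed

lemma large_step_into_bump_impossible:
  assumes "a s > 1/4"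
  shows False
proof (cases "s = N")
  case True
  have "\<psi> s \<ge> 0" using psi_nonneg[of s] s_bump unfolding in_bump_def by simp
  then have "1/4 < e s" using a_last assms True by simp
  then show False using e_small_up_to_bump[of s] s_bump by simp
next
  case False
  then have "\<rho> N > 33/32" "a N > 0" "W N * (\<rho> N)^2 \<ge> 49/64 * W s"
    using ratios_escape_after_bump[OF assms, of "N - s - 1"] s_bump by simp_all
  moreover from this have "\<psi> N = \<rho> N" using psi_off_bump[of N] s_bump unfolding in_bump_def by simp
  ultimately show False using e_lt_half_ratio[of N] a_last s_bump by simp
qed

end

lemma large_gradient_somewhere: "\<exists>m\<in>{1..N}. W m * (e m)^2 \<ge> W s / 1024"
proof (rule ccontr)
  assume "\<not> ?thesis"
  then have "W m * (e m)^2 < W s / 1024" if "1 \<le> m" "m \<le> N" for m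
    using that by force
  with small_step_into_bump_impossible large_step_into_bump_impossible show False
    by (cases "a s \<le> 1/4") auto
qed

end

lemma sum_power_div_le:
  fixes r :: real
  assumes "0 \<le> r" "r < 1" "T > 0"
  shows "(\<Sum>j<n. r ^ (j div T)) \<le> T / (1 - r)"
proof -
  have blocks: "(\<Sum>j<T*M. r ^ (j div T)) = T * (\<Sum>q<M. r^q)" for M
  proof (induction M)
    case (Suc M)
    have "{..<T * Suc M} = {..<T*M} \<union> {T*M..<T*M+T}" by auto
    then have "(\<Sum>j<T * Suc M. r ^ (j div T)) = (\<Sum>j\<in>{..<T*M} \<union> {T*M..<T*M+T}. r ^ (j div T))"
      by simp
    also have "\<dots> = (\<Sum>j<T*M. r ^ (j div T)) + (\<Sum>j=T*M..<T*M+T. r ^ (j div T))"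
      by (rule sum.union_disjoint) auto
    also have "(\<Sum>j=T*M..<T*M+T. r ^ (j div T)) = (\<Sum>j=T*M..<T*M+T. r ^ M)"
    proof (rule sum.cong)
      fix j assume "j \<in> {T*M..<T*M+T}"
      then have "j div T = M" using assms(3) by (auto intro: div_nat_eqI simp: mult.commute)
      then show "r ^ (j div T) = r ^ M" by simp
    qed simp
    finally show ?case using Suc.IH by (simp add: distrib_left)
  qed simp
  have "(\<Sum>j<n. r ^ (j div T)) \<le> (\<Sum>j<T*n. r ^ (j div T))"
    using assms by (intro sum_mono2) (auto simp: nat_mult_le_cancel1 intro: order_trans[of _ n])
  also have "\<dots> = T * ((1 - r^n) / (1 - r))" unfolding blocks using assms by (simp add: sum_gp_strict)
  also have "\<dots> \<le> T * (1 / (1 - r))" using assms by (intro mult_left_mono divide_right_mono) auto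
  finally show ?thesis by simp
qed

lemma y_vec_tail_sum_le:
  assumes "T > 0" "1 \<le> s" "s \<le> T*t"
  shows "(\<Sum>m=s..T*t. (y_vec T t m)^2) \<le> 64/15 * T * (y_vec T t s)^2"
proof -
  define r :: real where "r = 49/64"
  have "(\<Sum>m=s..T*t. (y_vec T t m)^2) = (\<Sum>j<T*t - s + 1. r ^ ((s - 1 + j) div T))"
    unfolding r_def
    by (rule sum.reindex_bij_witness[where j="\<lambda>m. m - s" and i="\<lambda>j. s + j"])
       (use assms in \<open>auto simp: y_vec_power2\<close>)
  also have "\<dots> \<le> (\<Sum>j<T*t - s + 1. r ^ ((s - 1) div T) * r ^ (j div T))"
  proof (rule sum_mono)
    fix j
    have "(s - 1) div T + j div T \<le> (s - 1 + j) div T" using div_add1_eq[of "s - 1" j T] by linarith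
    then show "r ^ ((s - 1 + j) div T) \<le> r ^ ((s - 1) div T) * r ^ (j div T)"
      unfolding power_add[symmetric] r_def by (intro power_decreasing) auto
  qed
  also have "\<dots> \<le> r ^ ((s - 1) div T) * (T / (1 - r))"
  proof -
    have "(\<Sum>j<T*t - s + 1. r ^ (j div T)) \<le> T / (1 - r)"
      by (rule sum_power_div_le) (use assms in \<open>auto simp: r_def\<close>)
    then show ?thesis unfolding sum_distrib_left[symmetric] by (intro mult_left_mono) (auto simp: r_def)
  qed
  also have "\<dots> = 64/15 * T * (y_vec T t s)^2" using y_vec_power2[of s T t] assms by (simp add: r_def)
  finally show ?thesis .
qed

lemma g_grad_large_at_first_bump:
  assumes "T > 0" "1 \<le> s" "s \<le> T*t" "in_bump (u s / y_vec T t s)"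
    and first: "\<And>j. 1 \<le> j \<Longrightarrow> j < s \<Longrightarrow> \<not> in_bump (u j / y_vec T t j)"
  shows "(y_vec T t s)^2 / 1024 \<le> (\<Sum>m=1..T*t. (g_grad T t u m)^2)"
proof -
  define N where "N = T*t"
  define y where "y = y_vec T t"
  define \<rho> where "\<rho> m = (if m = 0 then 0 else u m / y m)" for m
  define a where "a m = chain_res T u m / y m" for m
  define e where "e m = g_grad T t u m / y m" for m
  define \<psi> where "\<psi> m = v_deriv (y m) (u m) / y m" for m
  define W where "W m = (y m)^2" for m
  define c where "c m = (chain_coeff T m)^2" for m
  have y_pos: "1 \<le> m \<Longrightarrow> m \<le> N \<Longrightarrow> y m > 0" for m unfolding y_def N_def using y_vec_pos by auto
  have "1 \<le> N" unfolding N_def using assms(2,3) by (rule order_trans)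
  have "bump_chain a \<rho> \<psi> e W c N s"
  proof unfold_locales
    show "\<rho> m = \<rho> (m - 1) + a m" if "1 \<le> m" "m \<le> N" for m
      using chain_res_div_y_vec[of m T t u] that unfolding \<rho>_def a_def y_def N_def by auto
    show "c (m+1) * a (m+1) = a m + \<psi> m - e m" if "1 \<le> m" "m < N" for m
      using g_grad_div_y_vec[of m T t u] that unfolding c_def a_def \<psi>_def e_def y_def N_def by simp
    show "a N + \<psi> N - e N = 0"
      using g_grad_last[of T t u] \<open>1 \<le> N\<close> unfolding a_def \<psi>_def e_def y_def N_def
      by (simp add: diff_divide_distrib[symmetric] add_divide_distrib[symmetric])
    show "0 < c m \<and> c m \<le> 1" if "2 \<le> m" for m
      using chain_coeff_ge[of m T] chain_coeff_power2_le_1[of T m] that unfolding c_def by simp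
    show "W m > 0" if "1 \<le> m" "m \<le> N" for m using y_pos[OF that] unfolding W_def by simp
    show "W (m+1) \<ge> 49/64 * W m" if "1 \<le> m" "m < N" for m
      using y_vec_power2_step[of m T t] that unfolding W_def y_def N_def by simp
    show "W n \<le> W m" if "1 \<le> m" "m \<le> n" "n \<le> N" for m n
      using y_vec_antimono[of m n T t] that unfolding W_def y_def N_def by simp
    show "\<psi> m = \<rho> m" if "1 \<le> m" "m \<le> N" "\<not> in_bump (\<rho> m)" for m
      using v_deriv_off_bump[OF y_pos, of m "u m"] that y_pos[of m] unfolding \<psi>_def \<rho>_def by simp
    show "\<psi> m \<ge> 0" if "1 \<le> m" "m \<le> N" "\<rho> m \<ge> 0" for m
      using v_deriv_nonneg[of "u m" "y m"] y_pos[of m] that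
      unfolding \<psi>_def \<rho>_def by (simp add: zero_le_divide_iff)
  qed (use assms in \<open>auto simp: \<rho>_def y_def N_def\<close>)
  then obtain m where m: "m \<in> {1..N}" "W m * (e m)^2 \<ge> W s / 1024"
    using bump_chain.large_gradient_somewhere by blast
  have "W m * (e m)^2 = (g_grad T t u m)^2" unfolding W_def e_def using y_pos[of m] m(1)
    by (simp add: power_divide)
  also have "\<dots> \<le> (\<Sum>m=1..T*t. (g_grad T t u m)^2)"
    using m(1) unfolding N_def by (intro member_le_sum) auto
  finally show ?thesis using m(2) unfolding W_def y_def by simp
qed

lemma sum_bump_power2_le:
  assumes "T > 0"
  shows "(\<Sum>m=1..T*t. if in_bump (u m / y_vec T t m) then (u m)^2 else 0)
    \<le> 4650 * real T * (\<Sum>m=1..T*t. (g_grad T t u m)^2)"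
proof -
  define N where "N = T*t"
  define y where "y = y_vec T t"
  define bump where "bump m \<longleftrightarrow> 1 \<le> m \<and> m \<le> N \<and> in_bump (u m / y m)" for m
  define G where "G = (\<Sum>m=1..N. (g_grad T t u m)^2)"
  have "G \<ge> 0" unfolding G_def by (intro sum_nonneg) auto
  show ?thesis
  proof (cases "\<exists>m. bump m")
    case False
    then have "(\<Sum>m=1..N. if in_bump (u m / y m) then (u m)^2 else 0) = 0"
      unfolding bump_def by (intro sum.neutral) auto
    then show ?thesis using \<open>G \<ge> 0\<close> unfolding G_def N_def y_def by simp
  next
    case True
    define s where "s = (LEAST m. bump m)"
    have s: "1 \<le> s" "s \<le> N" "in_bump (u s / y s)"
      using LeastI_ex[OF True] unfolding s_def bump_def by auto
    have before_s: "\<not> in_bump (u j / y j)" if "1 \<le> j" "j < s" for j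
    proof -
      have "\<not> bump j" using not_less_Least[of j bump] that(2) unfolding s_def by blast
      then show ?thesis using that s(2) unfolding bump_def by simp
    qed
    have "(\<Sum>m=1..N. if in_bump (u m / y m) then (u m)^2 else 0)
        = (\<Sum>m=s..N. if in_bump (u m / y m) then (u m)^2 else 0)"
      using before_s s by (intro sum.mono_neutral_right) auto
    also have "\<dots> \<le> (\<Sum>m=s..N. (33/32)^2 * (y m)^2)"
      using in_bump_power2_le y_vec_pos s(1) unfolding y_def N_def by (intro sum_mono) auto
    also have "\<dots> \<le> (33/32)^2 * (64/15 * T * (y s)^2)"
      unfolding sum_distrib_left[symmetric] using y_vec_tail_sum_le[OF assms s(1)] s(2)
      unfolding y_def N_def by (intro mult_left_mono) auto
    also have "\<dots> \<le> (33/32)^2 * (64/15 * T * (1024 * G))"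
      using g_grad_large_at_first_bump[OF assms s(1), where t=t and u=u] s before_s
      unfolding y_def N_def G_def by (intro mult_left_mono) auto
    also have "\<dots> = 23232/5 * (T * G)" by (simp add: power2_eq_square)
    also have "\<dots> \<le> 4650 * real T * G" using \<open>G \<ge> 0\<close> by simp
    finally show ?thesis unfolding G_def N_def y_def .
  qed
qed

lemma sum_g_grad_mult_self_ge:
  assumes "T > 0"
  shows "(\<Sum>m=1..T*t. (chain_res T u m)^2) + (\<Sum>m=1..T*t. if in_bump (u m / y_vec T t m) then 0 else (u m)^2)
    \<le> (\<Sum>m=1..T*t. g_grad T t u m * u m)"
proof -
  have "(if in_bump (u m / y_vec T t m) then 0 else (u m)^2) \<le> v_deriv (y_vec T t m) (u m) * u m"
    if "m \<in> {1..T*t}" for m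
    using y_vec_pos[of m T t] that v_deriv_mult_self_nonneg v_deriv_off_bump
    by (auto simp: power2_eq_square)
  then have "(\<Sum>m=1..T*t. if in_bump (u m / y_vec T t m) then 0 else (u m)^2)
      \<le> (\<Sum>m=1..T*t. v_deriv (y_vec T t m) (u m) * u m)"
    by (rule sum_mono)
  then show ?thesis unfolding sum_g_grad_mult by (simp add: power2_eq_square)
qed

lemma le_add_of_power2_le:
  fixes p x G :: real
  assumes "0 \<le> p" "0 \<le> x" "0 \<le> G" "p^2 \<le> G * (p + x)"
  shows "p \<le> x + 2 * G"
proof (cases "p \<le> x")
  case False
  have "G * (p + x) \<le> G * (2 * p)" using False assms(3) by (intro mult_left_mono) auto
  then have "p * p \<le> (2 * G) * p" using assms(4) by (simp add: power2_eq_square algebra_simps)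
  then have "p \<le> 2 * G" using False assms(2) by (simp add: mult_le_cancel_right)
  then show ?thesis using assms(2) by simp
qed (use assms in simp)

lemma g_fun_le_grad:
  assumes "T > 0"
  shows "g_fun T t u \<le> 4700 * real T * (\<Sum>m=1..T*t. (g_grad T t u m)^2)"
proof -
  define N where "N = T*t"
  define G where "G = (\<Sum>m=1..N. (g_grad T t u m)^2)"
  define R where "R = (\<Sum>m=1..N. (chain_res T u m)^2)"
  define S where "S = (\<Sum>m=1..N. if in_bump (u m / y_vec T t m) then 0 else (u m)^2)"
  define X where "X = (\<Sum>m=1..N. if in_bump (u m / y_vec T t m) then (u m)^2 else 0)"
  have nonneg: "0 \<le> G" "0 \<le> R" "0 \<le> S" "0 \<le> X"
    unfolding G_def R_def S_def X_def by (auto intro!: sum_nonneg)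
  have u_sum: "(\<Sum>m=1..N. (u m)^2) = S + X"
    unfolding S_def X_def sum.distrib[symmetric] by (rule sum.cong) auto
  have "(R + S)^2 \<le> (\<Sum>m=1..N. g_grad T t u m * u m)^2"
    using sum_g_grad_mult_self_ge[OF assms, where t=t and u=u] nonneg
    unfolding R_def S_def N_def by (intro power_mono) auto
  also have "\<dots> \<le> (vnorm N (g_grad T t u) * vnorm N u)^2"
    using vinner_abs_le[of N "g_grad T t u" u] unfolding vinner_def abs_le_square_iff[symmetric]
    by (simp add: abs_mult vnorm_nonneg)
  also have "\<dots> = G * (S + X)" unfolding power_mult_distrib vnorm_power2 G_def u_sum ..
  also have "\<dots> \<le> G * ((R + S) + X)" using nonneg by (intro mult_left_mono) auto
  finally have "R + S \<le> X + 2 * G" using nonneg by (intro le_add_of_power2_le) auto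
  moreover have "(\<Sum>m=1..N. v_fun (y_vec T t m) (u m)) \<le> S / 2 + X / 2"
    unfolding add_divide_distrib[symmetric] u_sum[symmetric] sum_divide_distrib
    using v_fun_le_half_sq y_vec_pos unfolding N_def by (intro sum_mono) auto
  moreover have "g_fun T t u = R / 2 + (\<Sum>m=1..N. v_fun (y_vec T t m) (u m))"
    unfolding g_fun_eq_chain_res[OF assms] R_def N_def by simp
  ultimately have "g_fun T t u \<le> X + G" by linarith
  also have "\<dots> \<le> 4650 * real T * G + real T * G"
    using sum_bump_power2_le[OF assms] nonneg assms unfolding X_def G_def N_def
    by (intro add_mono) (auto simp: mult_le_cancel_right1)
  also have "\<dots> \<le> 4700 * real T * G" using nonneg by (simp add: mult_right_mono)
  finally show ?thesis unfolding G_def N_def .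
qed

lemma g_fun_nonneg: "T > 0 \<Longrightarrow> g_fun T t u \<ge> 0"
  unfolding g_fun_eq_chain_res by (auto intro!: add_nonneg_nonneg sum_nonneg v_fun_nonneg y_vec_pos)

lemma g_fun_zero: "T > 0 \<Longrightarrow> g_fun T t (\<lambda>_. 0) = 0"
  unfolding g_fun_eq_chain_res chain_res_def by (simp add: v_fun_def y_vec_def)

lemma g_tilde_nonneg: "T > 0 \<Longrightarrow> L > 0 \<Longrightarrow> D > 0 \<Longrightarrow> g_tilde L D T t x \<ge> 0"
  unfolding g_tilde_eq by (intro mult_nonneg_nonneg less_imp_le[OF g_tilde_scale_pos] g_fun_nonneg)

lemma Inf_g_tilde:
  assumes "T > 0" "L > 0" "D > 0"
  shows "Inf (g_tilde L D T t ` vecs (T*t)) = 0"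
proof (rule cInf_eq_minimum)
  define x where "x i = y_vec T t i / g_tilde_dilation D T" for i
  have "g_tilde_arg D T t x = (\<lambda>_. 0)"
    unfolding g_tilde_arg_def x_def using g_tilde_dilation_pos[OF assms(1,3)] by auto
  then show "0 \<in> g_tilde L D T t ` vecs (T*t)"
    using g_fun_zero[OF assms(1)] unfolding g_tilde_eq
    by (intro image_eqI[of _ _ x]) (auto simp: x_def vecs_def y_vec_def)
qed (use g_tilde_nonneg[OF assms] in auto)

lemma g_tilde_PL:
  fixes L D \<mu> :: real
  assumes "T > 0" "L > 0" "D > 0" "\<mu> > 0" "347800 * \<mu> * T \<le> L"
  shows "PL_cond (T*t) \<mu> (g_tilde L D T t)"
  unfolding PL_cond_def
proof (intro conjI ballI)
  show "differentiable_Rn (T*t) (g_tilde L D T t)" by (rule differentiable_g_tilde[OF assms(1-3)])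
  show "bdd_below (g_tilde L D T t ` vecs (T*t))"
    using g_tilde_nonneg[OF assms(1-3)] by (intro bdd_belowI[of _ 0]) auto
  fix x
  define \<alpha> where "\<alpha> = g_tilde_scale L D T"
  define \<beta> where "\<beta> = g_tilde_dilation D T"
  define u where "u = g_tilde_arg D T t x"
  define G where "G = (\<Sum>m=1..T*t. (g_grad T t u m)^2)"
  have "\<alpha> > 0" "\<beta> > 0" unfolding \<alpha>_def \<beta>_def using assms g_tilde_scale_pos g_tilde_dilation_pos by auto
  have "G \<ge> 0" unfolding G_def by (intro sum_nonneg) auto
  have "(vnorm (T*t) (grad (T*t) (g_tilde L D T t) x))^2 = (\<alpha> * \<beta>)^2 * G"
    unfolding grad_g_tilde[OF assms(1-3)] g_tilde_grad_def vnorm_scale G_def u_def \<alpha>_def \<beta>_def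
    by (simp add: power_mult_distrib vnorm_power2)
  also have "\<dots> = \<alpha> * (L / 37) * G"
    using g_tilde_scale_dilation[OF assms(1,3), of L] unfolding \<alpha>_def \<beta>_def
    by (simp add: power2_eq_square algebra_simps)
  also have "\<dots> \<ge> \<alpha> * (2 * \<mu> * (4700 * real T * G))"
  proof -
    have "2 * \<mu> * (4700 * real T * G) \<le> L / 37 * G" using mult_right_mono[OF assms(5) \<open>G \<ge> 0\<close>] by simp
    then show ?thesis using \<open>\<alpha> > 0\<close> by (simp add: mult.assoc)
  qed
  moreover have "g_tilde L D T t x - Inf (g_tilde L D T t ` vecs (T*t)) \<le> \<alpha> * (4700 * real T * G)"
    unfolding Inf_g_tilde[OF assms(1-3)] g_tilde_eq \<alpha>_def[symmetric] u_def[symmetric] G_def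
    using g_fun_le_grad[OF assms(1), where t=t and u=u] \<open>\<alpha> > 0\<close> by simp
  ultimately show "2 * \<mu> * (g_tilde L D T t x - Inf (g_tilde L D T t ` vecs (T*t)))
      \<le> (vnorm (T*t) (grad (T*t) (g_tilde L D T t) x))^2"
    using assms(4) by (smt (verit) mult_left_mono mult.assoc mult.commute)
qed

section \<open>Zero-respecting methods explore one coordinate per gradient\<close>

lemma g_tilde_grad_vanishes_beyond:
  assumes "T > 0" and x: "\<And>i. i > k \<Longrightarrow> x i = 0" and "i \<ge> k + 2"
  shows "g_tilde_grad L D T t x i = 0"
proof (cases "1 \<le> i \<and> i \<le> T*t")
  case True
  define u where "u = g_tilde_arg D T t x"
  have u: "u j = y_vec T t j" if "j > k" for j unfolding u_def g_tilde_arg_def using x[OF that] by simp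
  have "chain_res T u i = 0"
    using chain_res_y_vec[of i T t] True assms(3) u[of i] u[of "i - 1"] unfolding chain_res_def by simp
  moreover have "chain_res T u (i+1) = 0" if "i < T*t"
    using chain_res_y_vec[of "i+1" T t] that assms(3) u[of i] u[of "i+1"] unfolding chain_res_def by simp
  ultimately have "g_grad T t u i = 0"
    unfolding g_grad_def q_grad_def using True u[of i] assms(3) v_deriv_at_y[OF y_vec_pos[of i T t]] by auto
  then show ?thesis unfolding g_tilde_grad_def u_def by simp
qed (auto simp: g_tilde_grad_def g_grad_def)

lemma zero_respecting_iterate_support:
  assumes "T > 0" "L > 0" "D > 0" "zero_respecting (T*t) A" "i > n"
  shows "iterate (T*t) A (g_tilde L D T t) (\<lambda>_. 0) n i = 0"
  using assms(5)
proof (induction n arbitrary: i rule: less_induct)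
  case (less n)
  define f where "f = g_tilde L D T t"
  define x where "x j = iterate (T*t) A f (\<lambda>_. 0) j" for j
  show ?case
  proof (cases "n = 0")
    case False
    have "(\<lambda>_. 0::real) \<in> vecs (T*t)" unfolding vecs_def by simp
    then have "supp (\<lambda>i. x n i - 0) \<subseteq> (\<Union>j<n. supp (grad (T*t) f (x j)))"
      using assms(4)[unfolded zero_respecting_def, rule_format, of f "\<lambda>_. 0" n]
        differentiable_g_tilde[OF assms(1-3)] False
      unfolding f_def x_def by simp
    moreover have "i \<notin> supp (grad (T*t) f (x j))" if "j < n" for j
    proof -
      have "g_tilde_grad L D T t (x j) i = 0"
        by (rule g_tilde_grad_vanishes_beyond[OF assms(1), of j])
          (use less.IH[OF that] less.prems that in \<open>auto simp: x_def f_def\<close>)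
      then show ?thesis unfolding f_def grad_g_tilde[OF assms(1-3)] supp_def by simp
    qed
    ultimately show ?thesis unfolding supp_def x_def f_def by auto
  qed (simp add: iterate_def)
qed

lemma g_fun_unexplored_block_ge:
  assumes "T > 0" and x: "\<And>i. i > k \<Longrightarrow> x i = 0" and "k div T + 2 \<le> t"
  shows "g_fun T t (g_tilde_arg D T t x) \<ge> 31/64 * T * (49/64) ^ (k div T + 1)"
proof -
  define q where "q = k div T + 1"
  define u where "u = g_tilde_arg D T t x"
  have "k < q * T" unfolding q_def using assms(1) by (simp add: dividend_less_div_times)
  have block: "{q*T+1..q*T+T} \<subseteq> {1..T*t}"
  proof -
    have "q*T + T = (k div T + 2) * T" unfolding q_def by simp
    also have "\<dots> \<le> t * T" using assms(3) by (rule mult_right_mono) simp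
    finally have "q*T + T \<le> t * T" .
    then show ?thesis by (auto simp: mult.commute)
  qed
  \<comment> \<open>The whole block \<open>q\<close> is still untouched, so there \<open>u = y\<close> and \<open>v_fun y y = 31/64 * y^2\<close>.\<close>
  have "(\<Sum>m=q*T+1..q*T+T. v_fun (y_vec T t m) (u m)) = (\<Sum>m=q*T+1..q*T+T. 31/64 * (49/64)^q)"
  proof (rule sum.cong)
    fix m assume m: "m \<in> {q*T+1..q*T+T}"
    then have "1 \<le> m" "m \<le> T*t" "m > k" using block \<open>k < q * T\<close> by auto
    moreover have "(m - 1) div T = q"
      using m assms(1) by (intro div_nat_eqI) (auto simp: mult.commute)
    ultimately show "v_fun (y_vec T t m) (u m) = 31/64 * (49/64)^q"
      unfolding u_def g_tilde_arg_def using x v_fun_at_y[OF y_vec_pos] y_vec_power2 by simp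
  qed simp
  also have "\<dots> = T * (31/64 * (49/64)^q)" by simp
  finally have "T * (31/64 * (49/64)^q) = (\<Sum>m=q*T+1..q*T+T. v_fun (y_vec T t m) (u m))" ..
  also have "\<dots> \<le> (\<Sum>m=1..T*t. v_fun (y_vec T t m) (u m))"
    using block by (intro sum_mono2) (auto intro!: v_fun_nonneg y_vec_pos)
  moreover have "0 \<le> (\<Sum>m=1..T*t. (chain_res T u m)^2)" by (intro sum_nonneg) auto
  ultimately show ?thesis unfolding g_fun_eq_chain_res[OF assms(1)] u_def[symmetric] q_def[symmetric] by simp
qed

lemma g_fun_y_vec_bounds:
  assumes "T > 0" "t > 0"
  shows "0 < g_fun T t (y_vec T t)" "g_fun T t (y_vec T t) \<le> 3 * T"
proof -
  have "1 \<le> T*t" using assms by simp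
  have "(\<Sum>m=1..T*t. (chain_res T (y_vec T t) m)^2) = (\<Sum>m\<in>{1}. (chain_res T (y_vec T t) m)^2)"
    using \<open>1 \<le> T*t\<close> chain_res_y_vec by (intro sum.mono_neutral_right) auto
  also have "\<dots> = 1" using \<open>1 \<le> T*t\<close> unfolding chain_res_def by (simp add: y_vec_def)
  finally have R: "(\<Sum>m=1..T*t. (chain_res T (y_vec T t) m)^2) = 1" .
  have "(\<Sum>m=1..T*t. v_fun (y_vec T t m) (y_vec T t m)) = 31/64 * (\<Sum>m=1..T*t. (y_vec T t m)^2)"
    unfolding sum_distrib_left by (rule sum.cong) (auto simp: v_fun_at_y y_vec_pos)
  moreover have "0 \<le> (\<Sum>m=1..T*t. (y_vec T t m)^2)" by (intro sum_nonneg) auto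
  ultimately show "0 < g_fun T t (y_vec T t)" unfolding g_fun_eq_chain_res[OF assms(1)] R by simp
  have "y_vec T t 1 = 1" using \<open>1 \<le> T*t\<close> by (simp add: y_vec_def)
  then have "(\<Sum>m=1..T*t. (y_vec T t m)^2) \<le> 64/15 * T"
    using y_vec_tail_sum_le[OF assms(1) order_refl \<open>1 \<le> T*t\<close>] by simp
  with \<open>(\<Sum>m=1..T*t. v_fun (y_vec T t m) (y_vec T t m)) = _\<close> show "g_fun T t (y_vec T t) \<le> 3 * T"
    unfolding g_fun_eq_chain_res[OF assms(1)] R using assms(1) by simp
qed

lemma g_tilde_relative_gap_ge:
  assumes "T > 0" "L > 0" "D > 0" "zero_respecting (T*t) A" "k div T + 2 \<le> t"
  defines "f \<equiv> g_tilde L D T t"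
  shows "31/192 * (49/64) ^ (k div T + 1) * (f (\<lambda>_. 0) - Inf (f ` vecs (T*t)))
    \<le> f (iterate (T*t) A f (\<lambda>_. 0) k) - Inf (f ` vecs (T*t))"
proof -
  define \<alpha> where "\<alpha> = g_tilde_scale L D T"
  define r :: real where "r = (49/64) ^ (k div T + 1)"
  have "\<alpha> > 0" "r \<ge> 0" unfolding \<alpha>_def r_def using g_tilde_scale_pos assms(1-3) by auto
  have "t > 0" using assms(5) by simp
  have "g_tilde_arg D T t (\<lambda>_. 0) = y_vec T t" unfolding g_tilde_arg_def by simp
  then have "31/192 * r * f (\<lambda>_. 0) \<le> 31/192 * r * (\<alpha> * (3 * T))"
    unfolding f_def g_tilde_eq \<alpha>_def[symmetric] using g_fun_y_vec_bounds(2)[OF assms(1) \<open>t > 0\<close>] \<open>\<alpha> > 0\<close> \<open>r \<ge> 0\<close>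
    by (intro mult_left_mono) auto
  also have "\<dots> = \<alpha> * (31/64 * T * r)" by simp
  also have "\<dots> \<le> f (iterate (T*t) A f (\<lambda>_. 0) k)"
  proof -
    define x where "x = iterate (T*t) A f (\<lambda>_. 0) k"
    have "x i = 0" if "i > k" for i
      using zero_respecting_iterate_support[OF assms(1-4) that] unfolding x_def f_def .
    then have "31/64 * T * r \<le> g_fun T t (g_tilde_arg D T t x)"
      unfolding r_def using g_fun_unexplored_block_ge[OF assms(1) _ assms(5)] by blast
    moreover have "f x = \<alpha> * g_fun T t (g_tilde_arg D T t x)" unfolding f_def g_tilde_eq \<alpha>_def ..
    ultimately have "\<alpha> * (31/64 * T * r) \<le> f x" using \<open>\<alpha> > 0\<close> by simp
    then show ?thesis unfolding x_def .
  qed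
  finally show ?thesis unfolding f_def Inf_g_tilde[OF assms(1-3)] r_def by simp
qed

section \<open>Counting iterations\<close>

lemma ln_inverse_ge_4:
  fixes \<epsilon> :: real
  assumes "0 < \<epsilon>" "\<epsilon> < 0.01"
  shows "4 \<le> ln (1 / \<epsilon>)"
proof -
  have "exp (-1/4::real) \<ge> 3/4" using exp_ge_add_one_self[of "-1/4::real"] by simp
  then have "exp (1/4::real) \<le> 4/3" by (simp add: exp_minus field_simps)
  then have "exp (4::real) \<le> (4/3) ^ 16"
    using exp_of_nat_mult[of 16 "1/4::real"] by (simp add: power_mono)
  also have "\<dots> < 1 / \<epsilon>" using assms by (simp add: field_simps)
  finally have "ln (exp 4) < ln (1 / \<epsilon>)" using assms by (subst ln_less_cancel_iff) auto
  then show ?thesis by simp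
qed

lemma eps_lt_slow_rate:
  fixes \<epsilon> :: real and q :: nat
  assumes "0 < \<epsilon>" "4 \<le> ln (1 / \<epsilon>)" "real q < ln (1 / \<epsilon>) / 4"
  shows "\<epsilon> < 31/192 * (49/64) ^ (q + 1)"
proof -
  define l where "l = ln (1 / \<epsilon>)"
  define A where "A = exp (-7/8 * l + 1/2)"
  define B where "B = exp (- real (q + 1) / 2)"
  define C where "C = exp (- (l / 8 - real q / 2))"
  have "1 + 3 + 3^2/2 \<le> exp (3::real)" by (rule exp_lower_Taylor_quadratic) simp
  also have "\<dots> \<le> exp (7/8 * l - 1/2)" using assms(2) unfolding l_def by simp
  finally have "A * (17/2) \<le> A * exp (7/8 * l - 1/2)" unfolding A_def by (intro mult_left_mono) auto
  also have "\<dots> = 1" unfolding A_def by (simp flip: exp_add)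
  finally have A: "A \<le> 31/192" by linarith
  have "exp (-1/2::real) \<le> 49/64"
    using exp_ge_add_one_self[of "1/2::real"] by (simp add: exp_minus field_simps)
  moreover have "B = exp (-1/2) ^ (q + 1)"
    unfolding B_def exp_of_nat_mult[symmetric] by (simp add: field_simps)
  ultimately have B: "B \<le> (49/64) ^ (q + 1)" by (metis exp_ge_zero power_mono)
  have C: "C < 1" using assms(3) unfolding C_def l_def by simp
  have "\<epsilon> = A * B * C"
    unfolding A_def B_def C_def l_def using assms(1) by (simp add: ln_div field_simps flip: exp_add)
  also have "\<dots> \<le> 31/192 * (49/64) ^ (q + 1) * C"
    using A B unfolding C_def by (intro mult_right_mono mult_mono) (auto simp: A_def B_def)
  also have "\<dots> < 31/192 * (49/64) ^ (q + 1)" using C by simp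
  finally show ?thesis .
qed

lemma iterations_lower_bound:
  fixes L D \<epsilon> :: real
  assumes "T > 0" "L > 0" "D > 0" "zero_respecting (T*t) A"
    and "0 < \<epsilon>" "\<epsilon> < 0.01" "ln (1 / \<epsilon>) \<le> real t"
  defines "f \<equiv> g_tilde L D T t"
  assumes reached: "f (iterate (T*t) A f (\<lambda>_. 0) k) - Inf (f ` vecs (T*t))
      \<le> \<epsilon> * (f (\<lambda>_. 0) - Inf (f ` vecs (T*t)))"
  shows "real T * ln (1 / \<epsilon>) / 4 \<le> real k"
proof (rule ccontr)
  assume few: "\<not> ?thesis"
  define q where "q = k div T"
  have "4 \<le> ln (1 / \<epsilon>)" using ln_inverse_ge_4 assms(5,6) .
  have "q * T \<le> k" unfolding q_def by (rule div_times_less_eq_dividend)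
  then have "real q * real T \<le> real k" by (metis of_nat_le_iff of_nat_mult)
  then have "real q * real T < real T * (ln (1 / \<epsilon>) / 4)" using few by simp
  then have q: "real q < ln (1 / \<epsilon>) / 4" using assms(1) by (simp add: mult.commute)
  then have "k div T + 2 \<le> t" unfolding q_def using \<open>4 \<le> ln (1 / \<epsilon>)\<close> assms(7) by linarith
  have "0 < f (\<lambda>_. 0) - Inf (f ` vecs (T*t))"
    using g_fun_y_vec_bounds(1)[OF assms(1)] \<open>k div T + 2 \<le> t\<close> g_tilde_scale_pos[OF assms(1-3)]
    unfolding f_def Inf_g_tilde[OF assms(1-3)] g_tilde_eq g_tilde_arg_def by simp
  moreover have "31/192 * (49/64) ^ (q + 1) * (f (\<lambda>_. 0) - Inf (f ` vecs (T*t)))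
      \<le> \<epsilon> * (f (\<lambda>_. 0) - Inf (f ` vecs (T*t)))"
    using g_tilde_relative_gap_ge[OF assms(1-4) \<open>k div T + 2 \<le> t\<close>] reached unfolding f_def q_def by simp
  ultimately have "31/192 * (49/64) ^ (q + 1) \<le> \<epsilon>" by simp
  then show False using eps_lt_slow_rate[OF assms(5) \<open>4 \<le> ln (1 / \<epsilon>)\<close> q] by simp
qed

lemma exists_nat_between_half:
  fixes x :: real
  assumes "2 \<le> x"
  shows "\<exists>n::nat. x / 2 \<le> n \<and> n \<le> x"
proof (intro exI conjI)
  show "x / 2 \<le> real (nat \<lfloor>x\<rfloor>)" using assms by linarith
  show "real (nat \<lfloor>x\<rfloor>) \<le> x" using assms by linarith
qed

lemma g_tilde_hard_instance:
  fixes L \<mu> \<epsilon> D :: real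
  assumes "L \<ge> \<mu>" "\<mu> > 0" "L / \<mu> > 10^6" "0 < \<epsilon>" "\<epsilon> < 0.01" "D > 0"
  shows "\<exists>T t :: nat. 0 < T \<and> 0 < t \<and>
    L_smooth (T*t) L (g_tilde L D T t) \<and>
    PL_cond (T*t) \<mu> (g_tilde L D T t) \<and>
    (\<forall>A k. zero_respecting (T*t) A \<longrightarrow>
       g_tilde L D T t (iterate (T*t) A (g_tilde L D T t) (\<lambda>_. 0) k) - Inf (g_tilde L D T t ` vecs (T*t))
         \<le> \<epsilon> * (g_tilde L D T t (\<lambda>_. 0) - Inf (g_tilde L D T t ` vecs (T*t)))
       \<longrightarrow> real k \<ge> 1/3200000 * (L / \<mu>) * ln (1 / \<epsilon>))"
proof -
  have "L > 0" using assms(1,2) by simp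
  define \<kappa> where "\<kappa> = L / \<mu>"
  have "\<exists>n::nat. \<kappa> / 400000 / 2 \<le> n \<and> n \<le> \<kappa> / 400000"
    using assms(3) unfolding \<kappa>_def by (intro exists_nat_between_half) simp
  then obtain T :: nat where T: "\<kappa> / 800000 \<le> T" "T \<le> \<kappa> / 400000" by auto
  then have "T > 0" using assms(3) unfolding \<kappa>_def by (auto intro: ccontr)
  have "400000 * (\<mu> * T) \<le> L" using T(2) assms(2) unfolding \<kappa>_def by (simp add: field_simps)
  then have "347800 * \<mu> * T \<le> L" using assms(2) mult_nonneg_nonneg[of \<mu> "real T"] by linarith
  define t where "t = nat \<lceil>ln (1 / \<epsilon>)\<rceil>"
  have "4 \<le> ln (1 / \<epsilon>)" using ln_inverse_ge_4 assms(4,5) .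
  then have "ln (1 / \<epsilon>) \<le> real t" "t > 0" unfolding t_def by linarith+
  have "\<kappa> / 800000 * ln (1 / \<epsilon>) / 4 \<le> real T * ln (1 / \<epsilon>) / 4"
    using T(1) \<open>4 \<le> ln (1 / \<epsilon>)\<close> by (intro divide_right_mono mult_right_mono) auto
  then have rate: "1/3200000 * (L / \<mu>) * ln (1 / \<epsilon>) \<le> real T * ln (1 / \<epsilon>) / 4"
    unfolding \<kappa>_def by simp
  show ?thesis
  proof (rule exI[of _ T], rule exI[of _ t], intro conjI allI impI)
    show "L_smooth (T*t) L (g_tilde L D T t)" by (rule g_tilde_L_smooth[OF \<open>T > 0\<close> \<open>L > 0\<close> assms(6)])
    show "PL_cond (T*t) \<mu> (g_tilde L D T t)"
      by (rule g_tilde_PL[OF \<open>T > 0\<close> \<open>L > 0\<close> assms(6,2) \<open>347800 * \<mu> * T \<le> L\<close>])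
    fix A k
    assume "zero_respecting (T*t) A"
      "g_tilde L D T t (iterate (T*t) A (g_tilde L D T t) (\<lambda>_. 0) k) - Inf (g_tilde L D T t ` vecs (T*t))
         \<le> \<epsilon> * (g_tilde L D T t (\<lambda>_. 0) - Inf (g_tilde L D T t ` vecs (T*t)))"
    with iterations_lower_bound[OF \<open>T > 0\<close> \<open>L > 0\<close> assms(6) _ assms(4,5) \<open>ln (1 / \<epsilon>) \<le> real t\<close>]
    have "real T * ln (1 / \<epsilon>) / 4 \<le> real k" by blast
    with rate show "real k \<ge> 1/3200000 * (L / \<mu>) * ln (1 / \<epsilon>)" by linarith
  qed fact+
qed

theorem theorem2:
  shows "\<exists>C4 c :: real. C4 > 0 \<and> c > 0 \<and>
    (\<forall>L \<mu> \<epsilon> D :: real. L \<ge> \<mu> \<longrightarrow> \<mu> > 0 \<longrightarrow> L / \<mu> > C4 \<longrightarrow>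
       0 < \<epsilon> \<longrightarrow> \<epsilon> < 0.01 \<longrightarrow> D > 0 \<longrightarrow>
       (\<exists>T t :: nat. 0 < T \<and> 0 < t \<and>
          L_smooth (T*t) L (g_tilde L D T t) \<and>
          PL_cond (T*t) \<mu> (g_tilde L D T t) \<and>
          (\<forall>A k. zero_respecting (T*t) A \<longrightarrow>
             g_tilde L D T t (iterate (T*t) A (g_tilde L D T t) (\<lambda>_. 0) k)
               - Inf (g_tilde L D T t ` vecs (T*t))
             \<le> \<epsilon> * (g_tilde L D T t (\<lambda>_. 0) - Inf (g_tilde L D T t ` vecs (T*t)))
             \<longrightarrow> real k \<ge> c * (L / \<mu>) * ln (1 / \<epsilon>))))"
  by (rule exI[of _ "10^6"], rule exI[of _ "1/3200000"], intro conjI allI impI;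
      (rule g_tilde_hard_instance)?) simp_all

end
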